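(* Let $A,B\in\mathcal{B}(\mathcal{H})$ and let $f,g$ be nonnegative continuous functions on $[0,\infty)$ satisfying $f(t)g(t)=t$ for all $t\geq0$. Then for every unit vector $x\in\mathcal{H}$, all $r,s\geq 1$ and all $0<\alpha<1$, $$|\langle Ax,x\rangle|^r|\langle Bx,x\rangle|^s\leq \frac12\left\|\alpha f^{\frac{2r}{\alpha}}(|A|)+\alpha g^{\frac{2r}{\alpha}}(|A^*|)+(1-\alpha)f^{\frac{2s}{1-\alpha}}(|B|)+(1-\alpha)g^{\frac{2s}{1-\alpha}}(|B^*|)\right\|.$$
   Context: $\mathcal{H}$ is a complex Hilbert space, $\mathcal{B}(\mathcal{H})$ the bounded linear operators on it. For $T\in\mathcal{B}(\mathcal{H})$, $|T|=(T^*T)^{1/2}$, and $f(|T|)$ etc. are defined by continuous functional calculus; $f^{p}(|A|)$ means $(f(|A|))^{p}$. *)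

theory Defs
  imports "HOL-Analysis.Analysis" "HOL-Computational_Algebra.Polynomial"
begin

class complex_vector = real_vector +
  fixes scaleC :: "complex \<Rightarrow> 'a \<Rightarrow> 'a"
  assumes scaleC_add_right: "scaleC c (x + y) = scaleC c x + scaleC c y"
    and scaleC_add_left: "scaleC (c + d) x = scaleC c x + scaleC d x"
    and scaleC_scaleC: "scaleC c (scaleC d x) = scaleC (c * d) x"
    and scaleC_one: "scaleC 1 x = x"
    and scaleR_scaleC: "scaleR r x = scaleC (complex_of_real r) x"

class complex_inner = complex_vector + real_normed_vector +
  fixes cinner :: "'a \<Rightarrow> 'a \<Rightarrow> complex"
  assumes cinner_commute: "cinner y x = cnj (cinner x y)"
    and cinner_add_left: "cinner (x + y) z = cinner x z + cinner y z"
    and cinner_scaleC_left: "cinner (scaleC c x) y = c * cinner x y"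
    and cinner_ge_zero: "0 \<le> Re (cinner x x)"
    and norm_eq_sqrt_cinner: "norm x = sqrt (Re (cinner x x))"

class chilbert_space = complex_inner + complete_space

definition bounded_clinear :: "('a::complex_inner \<Rightarrow> 'a) \<Rightarrow> bool" where
  "bounded_clinear T \<longleftrightarrow> bounded_linear T \<and> (\<forall>c x. T (scaleC c x) = scaleC c (T x))"

definition adj :: "('a::complex_inner \<Rightarrow> 'a) \<Rightarrow> ('a \<Rightarrow> 'a)" where
  "adj T = (THE S. \<forall>x y. cinner (T x) y = cinner x (S y))"

definition op_poly :: "real poly \<Rightarrow> ('a::complex_inner \<Rightarrow> 'a) \<Rightarrow> ('a \<Rightarrow> 'a)" where
  "op_poly p P = (\<lambda>x. \<Sum>i\<le>degree p. coeff p i *\<^sub>R (P ^^ i) x)"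

text \<open>Continuous functional calculus for a positive operator P (spectrum contained in
  [0, norm P]): f(P) is the operator-norm limit of p_n(P) for any sequence of polynomials
  converging uniformly to f on [0, norm P].\<close>
definition fcalc :: "(real \<Rightarrow> real) \<Rightarrow> ('a::complex_inner \<Rightarrow> 'a) \<Rightarrow> ('a \<Rightarrow> 'a)" where
  "fcalc f P = (THE T. bounded_clinear T \<and>
     (\<forall>p :: nat \<Rightarrow> real poly. uniform_limit {0..onorm P} (\<lambda>n t. poly (p n) t) f sequentially
        \<longrightarrow> (\<lambda>n. onorm (\<lambda>x. op_poly (p n) P x - T x)) \<longlonglongrightarrow> 0))"

definition op_abs :: "('a::complex_inner \<Rightarrow> 'a) \<Rightarrow> ('a \<Rightarrow> 'a)" where
  "op_abs T = fcalc sqrt (\<lambda>x. adj T (T x))"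

end

theory Submission
  imports Defs
begin

(* The mixed Schwarz inequality |<A x, x>| <= ||f(|A|) x|| ||g(|A*|) x|| and a McCarthy-type
   inequality ||Q x||^p <= <Q^p x, x> (Q positive, ||x|| = 1, p >= 2) bound the left-hand side by
   (h1 h2)^(alpha/2) (k1 k2)^((1-alpha)/2), where, with p = 2r/alpha and q = 2s/(1-alpha),
   h1 = <f^p(|A|) x, x>, h2 = <g^p(|A*|) x, x>, k1 = <f^q(|B|) x, x> and k2 = <g^q(|B*|) x, x>.
   Two applications of the weighted arithmetic-geometric mean inequality bound this by
   <S x, x> / 2 <= ||S|| / 2, where S is the operator on the right-hand side.

   The adjoint and the functional calculus are only given as definite descriptions, so both are
   constructed: the adjoint from the Riesz representation theorem, and f(P) as the norm limit of
   p_n(P) for polynomials p_n converging to f uniformly on [0, ||P||].  These limits exist because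
   ||q(P)|| <= max |q| on [0, ||P||], a consequence of an operator Positivstellensatz: q >= 0 on
   [0, c] with ||P|| <= c implies q(P) >= 0.  The mixed Schwarz inequality is proved without a
   polar decomposition, by regularising the identity on the spectrum of A* A to
   sqrt u / (sqrt u + e). *)

lemma scaleC_zero_right [simp]: "scaleC c (0::'a::complex_vector) = 0"
  using scaleC_add_right[of c "0::'a" 0] by simp

lemma scaleC_zero_left [simp]: "scaleC 0 (x::'a::complex_vector) = 0"
  using scaleC_add_left[of 0 0 x] by simp

lemma scaleC_minus_left: "scaleC (- c) (x::'a::complex_vector) = - scaleC c x"
  using scaleC_add_left[of "- c" c x] by (simp add: eq_neg_iff_add_eq_0)

lemma scaleC_minus_one: "scaleC (- 1) (x::'a::complex_vector) = - x"
  by (simp add: scaleC_minus_left scaleC_one)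

lemma cinner_zero_left [simp]: "cinner 0 (y::'a::complex_inner) = 0"
  using cinner_scaleC_left[of 0 "0::'a" y] by simp

lemma cinner_zero_right [simp]: "cinner (x::'a::complex_inner) 0 = 0"
  using cinner_commute[of x "0::'a"] by simp

lemma cinner_add_right: "cinner (x::'a::complex_inner) (y + z) = cinner x y + cinner x z"
  using cinner_commute[of x "y + z"] cinner_commute[of x y] cinner_commute[of x z]
  by (simp add: cinner_add_left)

lemma cinner_scaleC_right: "cinner (x::'a::complex_inner) (scaleC c y) = cnj c * cinner x y"
  using cinner_commute[of x "scaleC c y"] cinner_commute[of x y]
  by (simp add: cinner_scaleC_left)

lemma cinner_minus_left: "cinner (- x::'a::complex_inner) y = - cinner x y"
  using cinner_scaleC_left[of "- 1" x y] by (simp add: scaleC_minus_one)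

lemma cinner_minus_right: "cinner (x::'a::complex_inner) (- y) = - cinner x y"
  using cinner_scaleC_right[of x "- 1" y] by (simp add: scaleC_minus_one)

lemma cinner_diff_left: "cinner (x - y::'a::complex_inner) z = cinner x z - cinner y z"
  using cinner_add_left[of x "- y" z] by (simp add: cinner_minus_left)

lemma cinner_diff_right: "cinner (x::'a::complex_inner) (y - z) = cinner x y - cinner x z"
  using cinner_add_right[of x y "- z"] by (simp add: cinner_minus_right)

lemma cinner_scaleR_left: "cinner (scaleR r x::'a::complex_inner) y = of_real r * cinner x y"
  by (simp add: scaleR_scaleC cinner_scaleC_left)

lemma cinner_scaleR_right: "cinner (x::'a::complex_inner) (scaleR r y) = of_real r * cinner x y"
  by (simp add: scaleR_scaleC cinner_scaleC_right)

lemma cinner_self_real: "cinner (x::'a::complex_inner) x = of_real ((norm x)\<^sup>2)"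
proof -
  have "Im (cinner x x) = Im (cnj (cinner x x))"
    by (rule arg_cong[OF cinner_commute])
  moreover have "Re (cinner x x) = (norm x)\<^sup>2"
    using norm_eq_sqrt_cinner[of x] cinner_ge_zero[of x] by simp
  ultimately show ?thesis by (simp add: complex_eq_iff)
qed

lemma Re_cinner_self: "Re (cinner (x::'a::complex_inner) x) = (norm x)\<^sup>2"
  by (simp add: cinner_self_real)

lemma norm_scaleC: "norm (scaleC c (x::'a::complex_inner)) = cmod c * norm x"
proof -
  have "cinner (scaleC c x) (scaleC c x) = (c * cnj c) * cinner x x"
    by (simp add: cinner_scaleC_left cinner_scaleC_right mult.assoc)
  then have "(norm (scaleC c x))\<^sup>2 = Re ((c * cnj c) * cinner x x)"
    by (simp only: Re_cinner_self[symmetric])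
  also have "\<dots> = (cmod c * norm x)\<^sup>2"
    by (simp only: cinner_self_real complex_mult_cnj power_mult_distrib
        flip: of_real_mult Re_complex_of_real) (simp add: cmod_power2)
  finally show ?thesis by (simp add: power2_eq_iff_nonneg)
qed

lemma norm_add_power2:
  "(norm (x + y::'a::complex_inner))\<^sup>2 = (norm x)\<^sup>2 + (norm y)\<^sup>2 + 2 * Re (cinner x y)"
  using cinner_commute[of y x]
  by (simp add: Re_cinner_self[symmetric] cinner_add_left cinner_add_right)

lemma parallelogram_law:
  "(norm (x + y::'a::complex_inner))\<^sup>2 + (norm (x - y))\<^sup>2 = 2 * (norm x)\<^sup>2 + 2 * (norm y)\<^sup>2"
  using cinner_commute[of y x]
  by (simp add: Re_cinner_self[symmetric] cinner_add_left cinner_add_right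
      cinner_diff_left cinner_diff_right)

lemma discriminant_le_of_quadratic_nonneg:
  fixes a m c :: real
  assumes "0 \<le> m" "0 \<le> c" "\<And>t. 0 \<le> a - 2 * t * m + t\<^sup>2 * m * c"
  shows "m \<le> a * c"
proof (cases "c = 0")
  case True
  show ?thesis
  proof (rule ccontr)
    assume "\<not> m \<le> a * c"
    then have "0 < m" using True by simp
    have "0 \<le> a - 2 * ((a + 1) / (2 * m)) * m + ((a + 1) / (2 * m))\<^sup>2 * m * c" by (rule assms(3))
    then show False using True \<open>0 < m\<close> by (simp add: field_simps)
  qed
next
  case False
  then have c: "0 < c" using assms(2) by simp
  have "0 \<le> a - 2 * (1 / c) * m + (1 / c)\<^sup>2 * m * c" by (rule assms(3))
  then show ?thesis using c by (simp add: field_simps power2_eq_square)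
qed

definition selfadjoint :: "('a::complex_inner \<Rightarrow> 'a) \<Rightarrow> bool" where
  "selfadjoint T \<longleftrightarrow> (\<forall>x y. cinner (T x) y = cinner x (T y))"

definition positive_op :: "('a::complex_inner \<Rightarrow> 'a) \<Rightarrow> bool" where
  "positive_op T \<longleftrightarrow> bounded_clinear T \<and> selfadjoint T \<and> (\<forall>x. 0 \<le> Re (cinner (T x) x))"

lemma bounded_clinear_imp_bounded_linear: "bounded_clinear T \<Longrightarrow> bounded_linear T"
  by (simp add: bounded_clinear_def)

lemma bounded_clinear_scaleC: "bounded_clinear T \<Longrightarrow> T (scaleC c x) = scaleC c (T x)"
  by (simp add: bounded_clinear_def)

lemma bounded_clinear_scaleR: "bounded_clinear T \<Longrightarrow> T (scaleR a x) = scaleR a (T x)"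
  by (simp add: scaleR_scaleC bounded_clinear_scaleC)

lemma bounded_clinear_add: "bounded_clinear T \<Longrightarrow> T (x + y) = T x + T y"
  by (simp add: bounded_clinear_def linear_add bounded_linear.linear)

lemma bounded_clinear_diff: "bounded_clinear T \<Longrightarrow> T (x - y) = T x - T y"
  by (simp add: bounded_clinear_def linear_diff bounded_linear.linear)

lemma bounded_clinear_zero: "bounded_clinear T \<Longrightarrow> T 0 = 0"
  by (simp add: bounded_clinear_def linear_0 bounded_linear.linear)

lemma bounded_clinear_minus: "bounded_clinear T \<Longrightarrow> T (- x) = - T x"
  by (simp add: bounded_clinear_def linear_neg bounded_linear.linear)

lemma bounded_clinear_sum: "bounded_clinear T \<Longrightarrow> T (\<Sum>i\<in>I. f i) = (\<Sum>i\<in>I. T (f i))"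
  by (induction I rule: infinite_finite_induct)
    (simp_all add: bounded_clinear_zero bounded_clinear_add)

lemma bounded_clinear_norm_le: "bounded_clinear T \<Longrightarrow> norm (T x) \<le> onorm T * norm x"
  by (rule onorm) (simp add: bounded_clinear_def)

lemma bounded_clinear_ident: "bounded_clinear (\<lambda>x. x)"
  by (simp add: bounded_clinear_def)

lemma bounded_clinear_compose:
  "bounded_clinear f \<Longrightarrow> bounded_clinear g \<Longrightarrow> bounded_clinear (\<lambda>x. f (g x))"
  by (simp add: bounded_clinear_def bounded_linear_compose)

lemma selfadjoint_cinner_real: "selfadjoint T \<Longrightarrow> cinner (T x) x = of_real (Re (cinner (T x) x))"
  using cinner_commute[of "T x" x] by (simp add: selfadjoint_def complex_eq_iff)

lemma positive_op_cauchy_schwarz: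
  assumes "positive_op T"
  shows "(cmod (cinner (T x) y))\<^sup>2 \<le> Re (cinner (T x) x) * Re (cinner (T y) y)"
proof -
  have T: "bounded_clinear T" and sa: "selfadjoint T" and pos: "\<And>z. 0 \<le> Re (cinner (T z) z)"
    using assms by (auto simp: positive_op_def)
  define b where "b = cinner (T x) y"
  define a where "a = Re (cinner (T x) x)"
  define c where "c = Re (cinner (T y) y)"
  have byx: "cinner (T y) x = cnj b"
    using sa cinner_commute[of "T x" y] by (simp add: b_def selfadjoint_def)
  have Tyy: "cinner (T y) y = of_real c"
    using selfadjoint_cinner_real[OF sa] c_def by simp
  have "(cmod b)\<^sup>2 \<le> a * c"
  proof (rule discriminant_le_of_quadratic_nonneg)
    show "0 \<le> c" using pos c_def by simp
    fix t :: real
    define l where "l = complex_of_real t * b"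
    have "cinner (T (x - scaleC l y)) (x - scaleC l y)
        = cinner (T x) x - cnj l * b - l * cnj b + l * cnj l * cinner (T y) y"
      by (simp add: bounded_clinear_diff[OF T] bounded_clinear_scaleC[OF T] cinner_diff_left
          cinner_diff_right cinner_scaleC_left cinner_scaleC_right byx b_def algebra_simps)
    moreover have "cnj l * b = of_real (t * (cmod b)\<^sup>2)" "l * cnj b = of_real (t * (cmod b)\<^sup>2)"
      "l * cnj l = of_real (t\<^sup>2 * (cmod b)\<^sup>2)"
      using cmod_power2[of b] by (simp_all add: l_def complex_eq_iff algebra_simps power2_eq_square)
    ultimately have "Re (cinner (T (x - scaleC l y)) (x - scaleC l y))
        = a - 2 * t * (cmod b)\<^sup>2 + t\<^sup>2 * (cmod b)\<^sup>2 * c"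
      by (simp add: Tyy a_def power2_eq_square)
    then show "0 \<le> a - 2 * t * (cmod b)\<^sup>2 + t\<^sup>2 * (cmod b)\<^sup>2 * c"
      using pos by metis
  qed simp
  then show ?thesis by (simp add: a_def b_def c_def)
qed

lemma positive_op_id: "positive_op (id::'a::complex_inner \<Rightarrow> 'a)"
  by (auto simp: positive_op_def selfadjoint_def bounded_clinear_def Re_cinner_self id_def)

lemma cmod_cinner_le: "cmod (cinner (x::'a::complex_inner) y) \<le> norm x * norm y"
proof -
  have "(cmod (cinner x y))\<^sup>2 \<le> (norm x * norm y)\<^sup>2"
    using positive_op_cauchy_schwarz[OF positive_op_id, of x y]
    by (simp add: Re_cinner_self power_mult_distrib)
  then show ?thesis by (rule power2_le_imp_le) simp
qed

lemma Re_cinner_le_onorm_power2: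
  assumes "bounded_linear T"
  shows "Re (cinner (T x) x) \<le> onorm T * (norm x)\<^sup>2"
proof -
  have "Re (cinner (T x) x) \<le> norm (T x) * norm x"
    using complex_Re_le_cmod order_trans cmod_cinner_le by blast
  also have "\<dots> \<le> onorm T * norm x * norm x"
    by (intro mult_right_mono onorm[OF assms]) simp
  finally show ?thesis by (simp add: power2_eq_square ac_simps)
qed

lemma Re_cinner_le_onorm: "bounded_linear T \<Longrightarrow> norm x = 1 \<Longrightarrow> Re (cinner (T x) x) \<le> onorm T"
  using Re_cinner_le_onorm_power2[of T x] by simp

lemma positive_op_norm_power2_le:
  assumes P: "positive_op P"
  shows "(norm (P x))\<^sup>2 \<le> onorm P * Re (cinner (P x) x)"
proof (cases "P x = 0")
  case True
  then show ?thesis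
    using P onorm_pos_le[of P] by (simp add: positive_op_def bounded_clinear_def)
next
  case False
  have "((norm (P x))\<^sup>2)\<^sup>2 = (cmod (cinner (P x) (P x)))\<^sup>2"
    by (simp only: cinner_self_real norm_of_real) simp
  also have "\<dots> \<le> Re (cinner (P x) x) * Re (cinner (P (P x)) (P x))"
    by (rule positive_op_cauchy_schwarz[OF P])
  also have "\<dots> \<le> Re (cinner (P x) x) * (onorm P * (norm (P x))\<^sup>2)"
    using P by (intro mult_left_mono Re_cinner_le_onorm_power2)
      (auto simp: positive_op_def bounded_clinear_def)
  finally have "(norm (P x))\<^sup>2 * (norm (P x))\<^sup>2 \<le> (onorm P * Re (cinner (P x) x)) * (norm (P x))\<^sup>2"
    by (simp add: power2_eq_square[of "(norm (P x))\<^sup>2"] ac_simps)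
  moreover have "0 < (norm (P x))\<^sup>2" using False by simp
  ultimately show ?thesis by (rule mult_right_le_imp_le)
qed

subsection \<open>The Riesz representation theorem and the adjoint\<close>

lemma Cauchy_of_dist_le_vanishing:
  fixes X :: "nat \<Rightarrow> 'a::metric_space"
  assumes d: "d \<longlonglongrightarrow> 0" and le: "\<And>m n. dist (X m) (X n) \<le> d m + d n"
  shows "Cauchy X"
proof (rule metric_CauchyI)
  fix e :: real assume "0 < e"
  then obtain N where N: "\<And>n. N \<le> n \<Longrightarrow> \<bar>d n\<bar> < e / 2"
    using tendstoD[OF d, of "e / 2"] by (auto simp: eventually_sequentially dist_real_def)
  have "dist (X m) (X n) < e" if "N \<le> m" "N \<le> n" for m n
    using le[of m n] N[OF that(1)] N[OF that(2)] by arith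
  then show "\<exists>N. \<forall>m\<ge>N. \<forall>n\<ge>N. dist (X m) (X n) < e" by blast
qed

lemma exists_unit_vector_near_onorm:
  fixes \<phi> :: "'a::complex_inner \<Rightarrow> complex"
  assumes bl: "bounded_linear \<phi>" and cl: "\<And>c x. \<phi> (scaleC c x) = c * \<phi> x"
    and pos: "0 < onorm \<phi>" and e: "0 < e"
  shows "\<exists>u. norm u = 1 \<and> onorm \<phi> - e < Re (\<phi> u)"
proof -
  define e' where "e' = min e (onorm \<phi> / 2)"
  have e': "0 < e'" "e' \<le> e" "e' \<le> onorm \<phi> / 2" using e pos by (auto simp: e'_def)
  obtain x where x: "(onorm \<phi> - e') * norm x < norm (\<phi> x)"
  proof (rule ccontr)
    assume "\<not> thesis"
    then have "\<And>x. norm (\<phi> x) \<le> (onorm \<phi> - e') * norm x" using that by (meson not_le)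
    then have "onorm \<phi> \<le> onorm \<phi> - e'" using e' by (intro onorm_bound) auto
    then show False using e' by simp
  qed
  have "0 \<le> (onorm \<phi> - e') * norm x" using e' by simp
  then have fx: "\<phi> x \<noteq> 0" and nx: "0 < norm x"
    using x bl by (auto simp: linear_simps)
  \<comment> \<open>Rotate x so that \<open>\<phi>\<close> becomes real and positive on it.\<close>
  define u where "u = scaleC (cnj (\<phi> x) / of_real (cmod (\<phi> x) * norm x)) x"
  have "norm u = 1" using fx nx by (simp add: u_def norm_scaleC norm_divide norm_mult)
  have "\<phi> u = (cnj (\<phi> x) * \<phi> x) / of_real (cmod (\<phi> x) * norm x)"
    by (simp add: u_def cl)
  also have "\<dots> = of_real (cmod (\<phi> x) / norm x)"
    using fx nx by (simp add: complex_norm_square[symmetric] mult.commute power2_eq_square)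
  finally have "Re (\<phi> u) = cmod (\<phi> x) / norm x" by simp
  also have "\<dots> > onorm \<phi> - e'" using x nx by (simp add: field_simps)
  finally show ?thesis using \<open>norm u = 1\<close> e' by (intro exI[of _ u]) auto
qed

text \<open>Uniform convexity of the unit ball, by the parallelogram law.\<close>

lemma unit_vectors_close_of_near_norming:
  fixes \<phi> :: "'a::complex_inner \<Rightarrow> complex"
  assumes bl: "bounded_linear \<phi>" and M: "0 < M" and bound: "\<And>z. norm (\<phi> z) \<le> M * norm z"
    and u: "norm u = 1" and v: "norm v = 1" and \<eta>: "0 \<le> \<eta>"
    and near: "M * (2 - \<eta>) \<le> Re (\<phi> u) + Re (\<phi> v)"
  shows "(norm (u - v))\<^sup>2 \<le> 4 * \<eta>"
proof -
  have par: "(norm (u - v))\<^sup>2 = 4 - (norm (u + v))\<^sup>2"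
    using parallelogram_law[of u v] u v by simp
  show ?thesis
  proof (cases "2 \<le> \<eta>")
    case True
    then show ?thesis using par zero_le_power2[of "norm (u + v)"] by linarith
  next
    case False
    have "M * (2 - \<eta>) \<le> Re (\<phi> (u + v))" using near bl by (simp add: linear_simps)
    also have "\<dots> \<le> M * norm (u + v)" using complex_Re_le_cmod bound order_trans by blast
    finally have "2 - \<eta> \<le> norm (u + v)" using M by simp
    then have "(2 - \<eta>)\<^sup>2 \<le> (norm (u + v))\<^sup>2" using False by (intro power_mono) simp_all
    then have "(norm (u - v))\<^sup>2 \<le> 4 - (2 - \<eta>)\<^sup>2" using par by linarith
    also have "\<dots> = 4 * \<eta> - \<eta>\<^sup>2" by (simp add: power2_eq_square algebra_simps)
    finally show ?thesis using zero_le_power2[of \<eta>] by linarith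
  qed
qed

lemma Cauchy_of_near_norming:
  fixes \<phi> :: "'a::complex_inner \<Rightarrow> complex"
  assumes bl: "bounded_linear \<phi>" and M: "0 < M" and bound: "\<And>z. norm (\<phi> z) \<le> M * norm z"
    and xs: "\<And>n. norm (xs n) = 1" "\<And>n. M - 1 / real (Suc n) < Re (\<phi> (xs n))"
  shows "Cauchy xs"
proof (rule Cauchy_of_dist_le_vanishing)
  show "(\<lambda>n. sqrt (4 / M / real (Suc n))) \<longlonglongrightarrow> 0"
    using tendsto_real_sqrt[OF LIMSEQ_Suc[OF lim_const_over_n[of "4 / M"]]] by simp
  fix m n
  define \<eta> where "\<eta> = (1 / real (Suc m) + 1 / real (Suc n)) / M"
  have "M * \<eta> = 1 / real (Suc m) + 1 / real (Suc n)"
    unfolding \<eta>_def using M by simp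
  then have near: "M * (2 - \<eta>) \<le> Re (\<phi> (xs m)) + Re (\<phi> (xs n))"
    using xs(2)[of m] xs(2)[of n] by (simp only: right_diff_distrib)
  have "0 \<le> \<eta>" using M by (simp add: \<eta>_def)
  then have "(norm (xs m - xs n))\<^sup>2 \<le> 4 * \<eta>"
    by (rule unit_vectors_close_of_near_norming[OF bl M bound xs(1) xs(1) _ near])
  also have "4 * \<eta> = 4 / M / real (Suc m) + 4 / M / real (Suc n)"
    by (simp add: \<eta>_def add_divide_distrib mult.commute)
  finally have "dist (xs m) (xs n) \<le> sqrt (4 / M / real (Suc m) + 4 / M / real (Suc n))"
    by (simp add: dist_norm real_le_rsqrt)
  also have "\<dots> \<le> sqrt (4 / M / real (Suc m)) + sqrt (4 / M / real (Suc n))"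
    using M by (intro sqrt_add_le_add_sqrt) simp_all
  finally show "dist (xs m) (xs n) \<le> sqrt (4 / M / real (Suc m)) + sqrt (4 / M / real (Suc n))" .
qed

lemma exists_norming_unit_vector:
  fixes \<phi> :: "'a::chilbert_space \<Rightarrow> complex"
  assumes bl: "bounded_linear \<phi>" and cl: "\<And>c x. \<phi> (scaleC c x) = c * \<phi> x"
    and pos: "0 < onorm \<phi>"
  obtains x0 where "norm x0 = 1" and "\<phi> x0 = of_real (onorm \<phi>)"
proof -
  define M where "M = onorm \<phi>"
  have M: "0 < M" using pos by (simp add: M_def)
  have bound: "\<And>z. norm (\<phi> z) \<le> M * norm z" using onorm[OF bl] by (simp add: M_def)
  have "\<forall>n. \<exists>u. norm u = 1 \<and> M - 1 / real (Suc n) < Re (\<phi> u)"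
    using exists_unit_vector_near_onorm[OF bl cl pos] by (simp add: M_def)
  then obtain xs where xs: "\<And>n. norm (xs n) = 1" "\<And>n. M - 1 / real (Suc n) < Re (\<phi> (xs n))"
    by metis
  then obtain x0 where lim: "xs \<longlonglongrightarrow> x0"
    using Cauchy_of_near_norming[OF bl M bound] convergent_eq_Cauchy by blast
  have nx0: "norm x0 = 1" using tendsto_norm[OF lim] xs(1) by (simp add: LIMSEQ_const_iff)
  have "M \<le> Re (\<phi> x0)"
  proof (rule tendsto_le)
    show "(\<lambda>n. M - 1 / real (Suc n)) \<longlonglongrightarrow> M"
      using tendsto_diff[OF tendsto_const[of M] LIMSEQ_Suc[OF lim_1_over_n]] by simp
    show "(\<lambda>n. Re (\<phi> (xs n))) \<longlonglongrightarrow> Re (\<phi> x0)"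
      by (intro tendsto_intros bounded_linear.tendsto[OF bl lim])
    show "\<forall>\<^sub>F n in sequentially. M - 1 / real (Suc n) \<le> Re (\<phi> (xs n))"
      using xs(2) by (simp add: less_imp_le)
  qed simp
  moreover have "cmod (\<phi> x0) \<le> M" using bound[of x0] nx0 by simp
  ultimately have "Re (\<phi> x0) = M" and "cmod (\<phi> x0) = M"
    using complex_Re_le_cmod[of "\<phi> x0"] by linarith+
  then have "\<phi> x0 = of_real M" using cmod_power2[of "\<phi> x0"] by (simp add: complex_eq_iff)
  then show ?thesis using that nx0 by (simp add: M_def)
qed

text \<open>A norming vector is orthogonal to the kernel: otherwise moving it along the kernel would
  decrease its norm while keeping the value of \<open>\<phi>\<close>.\<close>

lemma norming_vector_orthogonal_kernel:
  fixes \<phi> :: "'a::complex_inner \<Rightarrow> complex"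
  assumes bl: "bounded_linear \<phi>" and cl: "\<And>c x. \<phi> (scaleC c x) = c * \<phi> x"
    and M: "0 < M" and bound: "\<And>z. norm (\<phi> z) \<le> M * norm z"
    and x0: "norm x0 = 1" "\<phi> x0 = of_real M" and k: "\<phi> k = 0"
  shows "cinner k x0 = 0"
proof -
  define b where "b = cinner k x0"
  have "(cmod b)\<^sup>2 \<le> 0 * (norm k)\<^sup>2"
  proof (rule discriminant_le_of_quadratic_nonneg)
    fix s :: real
    define t where "t = - (of_real s * cnj b)"
    have "\<phi> (x0 + scaleC t k) = of_real M" using bl k x0 by (simp add: linear_simps cl)
    then have "M \<le> M * norm (x0 + scaleC t k)" using bound[of "x0 + scaleC t k"] by simp
    then have "1 \<le> norm (x0 + scaleC t k)" using M by simp
    then have "1 \<le> (norm (x0 + scaleC t k))\<^sup>2" by (simp add: one_le_power)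
    also have "\<dots> = 1 + (cmod t)\<^sup>2 * (norm k)\<^sup>2 + 2 * Re (cnj t * cnj b)"
      using cinner_commute[of x0 k]
      by (simp add: norm_add_power2 norm_scaleC x0 power_mult_distrib cinner_scaleC_right b_def)
    also have "cnj t * cnj b = - of_real (s * (cmod b)\<^sup>2)"
    proof -
      have "cnj t * cnj b = - (of_real s * (b * cnj b))" by (simp add: t_def ac_simps)
      also have "b * cnj b = of_real ((cmod b)\<^sup>2)" by (rule complex_norm_square[symmetric])
      finally show ?thesis by simp
    qed
    also have "(cmod t)\<^sup>2 = s\<^sup>2 * (cmod b)\<^sup>2" by (simp add: t_def norm_mult power_mult_distrib)
    finally show "0 \<le> 0 - 2 * s * (cmod b)\<^sup>2 + s\<^sup>2 * (cmod b)\<^sup>2 * (norm k)\<^sup>2"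
      by (simp add: algebra_simps)
  qed simp_all
  then show ?thesis by (simp add: b_def)
qed

theorem riesz_representation:
  fixes \<phi> :: "'a::chilbert_space \<Rightarrow> complex"
  assumes bl: "bounded_linear \<phi>" and cl: "\<And>c x. \<phi> (scaleC c x) = c * \<phi> x"
  shows "\<exists>y. \<forall>x. \<phi> x = cinner x y"
proof (cases "onorm \<phi> = 0")
  case True
  then show ?thesis using onorm_eq_0[OF bl] by (intro exI[of _ 0]) simp
next
  case False
  define M where "M = onorm \<phi>"
  have M: "0 < M" using False onorm_pos_le[OF bl] by (simp add: M_def)
  obtain x0 where x0: "norm x0 = 1" "\<phi> x0 = of_real M"
    using exists_norming_unit_vector[OF bl cl] M by (auto simp: M_def)
  have "\<phi> x = cinner x (scaleR M x0)" for x
  proof -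
    define k where "k = x - scaleC (\<phi> x / of_real M) x0"
    have "\<phi> k = 0" using bl M by (simp add: k_def linear_simps cl x0)
    then have "cinner k x0 = 0"
      using M onorm[OF bl] x0
      by (intro norming_vector_orthogonal_kernel[OF bl cl]) (simp_all add: M_def)
    moreover have "cinner x x0 = cinner k x0 + (\<phi> x / of_real M) * cinner x0 x0"
      by (simp add: k_def cinner_diff_left cinner_scaleC_left)
    ultimately show ?thesis using M by (simp add: cinner_scaleR_right cinner_self_real x0)
  qed
  then show ?thesis by blast
qed

lemma cinner_ext_right:
  assumes "\<And>x. cinner x u = cinner x (v::'a::complex_inner)" shows "u = v"
proof -
  have "cinner (u - v) (u - v) = 0" using assms[of "u - v"] by (simp add: cinner_diff_right)
  then show ?thesis by (simp add: cinner_self_real)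
qed

lemma bounded_linear_cinner_left_comp:
  assumes A: "bounded_clinear (A::'a::complex_inner \<Rightarrow> 'a)"
  shows "bounded_linear (\<lambda>x. cinner (A x) y)"
proof (rule bounded_linear_intro[where K = "onorm A * norm y"])
  show "cinner (A (x + z)) y = cinner (A x) y + cinner (A z) y" for x z
    by (simp add: bounded_clinear_add[OF A] cinner_add_left)
  show "cinner (A (scaleR r x)) y = scaleR r (cinner (A x) y)" for r x
    by (simp add: bounded_clinear_scaleR[OF A] cinner_scaleR_left scaleR_conv_of_real)
  show "norm (cinner (A x) y) \<le> norm x * (onorm A * norm y)" for x
    using cmod_cinner_le[of "A x" y]
      mult_right_mono[OF bounded_clinear_norm_le[OF A, of x], of "norm y"]
    by (simp add: ac_simps)
qed

lemma cinner_adj_right: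
  assumes A: "bounded_clinear (A::'a::chilbert_space \<Rightarrow> 'a)"
  shows "cinner (A x) y = cinner x (adj A y)"
proof -
  have "\<forall>y. \<exists>v. \<forall>x. cinner (A x) y = cinner x v"
    using riesz_representation[OF bounded_linear_cinner_left_comp[OF A]]
    by (simp add: bounded_clinear_scaleC[OF A] cinner_scaleC_left)
  then obtain S where S: "\<forall>x y. cinner (A x) y = cinner x (S y)" by metis
  have "\<forall>x y. cinner (A x) y = cinner x (adj A y)"
    unfolding adj_def
  proof (rule theI[of _ S])
    show "\<forall>x y. cinner (A x) y = cinner x (S y)" by (rule S)
    show "S' = S" if "\<forall>x y. cinner (A x) y = cinner x (S' y)" for S'
      using that S by (intro ext cinner_ext_right) metis
  qed
  then show ?thesis by blast
qed

lemma cinner_adj_left: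
  assumes "bounded_clinear (A::'a::chilbert_space \<Rightarrow> 'a)"
  shows "cinner (adj A y) x = cinner y (A x)"
  using cinner_adj_right[OF assms, of x y] cinner_commute[of "A x" y] cinner_commute[of x "adj A y"]
  by simp

lemma bounded_clinear_adj:
  assumes A: "bounded_clinear (A::'a::chilbert_space \<Rightarrow> 'a)"
  shows "bounded_clinear (adj A)"
proof -
  have add: "adj A (y + z) = adj A y + adj A z" for y z
    by (rule cinner_ext_right) (simp add: cinner_adj_right[OF A, symmetric] cinner_add_right)
  have sc: "adj A (scaleC c y) = scaleC c (adj A y)" for c y
    by (rule cinner_ext_right) (simp add: cinner_adj_right[OF A, symmetric] cinner_scaleC_right)
  have bnd: "norm (adj A y) \<le> norm y * onorm A" for y
  proof -
    have "(norm (adj A y))\<^sup>2 = Re (cinner (A (adj A y)) y)"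
      by (simp add: Re_cinner_self[symmetric] cinner_adj_right[OF A])
    also have "\<dots> \<le> norm (A (adj A y)) * norm y"
      using complex_Re_le_cmod order_trans cmod_cinner_le by blast
    also have "\<dots> \<le> onorm A * norm (adj A y) * norm y"
      by (intro mult_right_mono bounded_clinear_norm_le[OF A]) simp
    finally have "norm (adj A y) * norm (adj A y) \<le> norm (adj A y) * (norm y * onorm A)"
      by (simp add: power2_eq_square ac_simps)
    then show ?thesis
      using A onorm_pos_le[of A] by (cases "adj A y = 0") (simp_all add: bounded_clinear_def)
  qed
  have "bounded_linear (adj A)"
    by (rule bounded_linear_intro[OF add _ bnd]) (simp add: sc scaleR_scaleC)
  then show ?thesis using sc by (simp add: bounded_clinear_def)
qed

lemma adj_adj:
  assumes A: "bounded_clinear (A::'a::chilbert_space \<Rightarrow> 'a)"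
  shows "adj (adj A) = A"
  using cinner_adj_right[OF bounded_clinear_adj[OF A]] cinner_adj_left[OF A]
  by (intro ext cinner_ext_right) metis

lemma positive_op_adj_comp:
  assumes A: "bounded_clinear (A::'a::chilbert_space \<Rightarrow> 'a)"
  shows "positive_op (\<lambda>x. adj A (A x))"
  unfolding positive_op_def selfadjoint_def
  by (simp add: bounded_clinear_compose[OF bounded_clinear_adj[OF A] A] cinner_adj_left[OF A]
      cinner_adj_right[OF A, symmetric] Re_cinner_self)

lemma positive_op_comp_adj:
  assumes A: "bounded_clinear (A::'a::chilbert_space \<Rightarrow> 'a)"
  shows "positive_op (\<lambda>x. A (adj A x))"
  using positive_op_adj_comp[OF bounded_clinear_adj[OF A]] adj_adj[OF A] by simp

section \<open>Polynomials in an operator\<close>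

lemma op_poly_upto:
  assumes "degree p \<le> n"
  shows "op_poly p P x = (\<Sum>i\<le>n. coeff p i *\<^sub>R (P ^^ i) x)"
  unfolding op_poly_def using assms
  by (intro sum.mono_neutral_left) (auto simp: coeff_eq_0)

lemma op_poly_0 [simp]: "op_poly 0 P x = 0"
  by (simp add: op_poly_def)

lemma op_poly_const: "op_poly [:a:] P x = a *\<^sub>R x"
  by (simp add: op_poly_def)

lemma op_poly_1: "op_poly 1 P x = x"
  using op_poly_const[of 1 P x] by (simp add: one_pCons)

lemma op_poly_add: "op_poly (p + q) P x = op_poly p P x + op_poly q P x"
proof -
  define n where "n = max (degree p) (degree q)"
  have "degree p \<le> n" "degree q \<le> n" "degree (p + q) \<le> n"
    by (simp_all add: n_def degree_add_le)
  then show ?thesis by (simp add: op_poly_upto[of _ n] scaleR_add_left sum.distrib)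
qed

lemma op_poly_smult: "op_poly (smult a p) P x = a *\<^sub>R op_poly p P x"
  using op_poly_upto[of "smult a p" "degree p"]
  by (simp add: degree_smult_le op_poly_def scaleR_sum_right)

lemma op_poly_diff: "op_poly (p - q) P x = op_poly p P x - op_poly q P x"
proof -
  have "p - q = p + smult (- 1) q" by simp
  then show ?thesis by (simp only: op_poly_add op_poly_smult) simp
qed

lemma op_poly_pCons:
  assumes P: "bounded_clinear P"
  shows "op_poly (pCons a p) P x = a *\<^sub>R x + P (op_poly p P x)"
proof -
  have "op_poly (pCons a p) P x = (\<Sum>i\<le>Suc (degree p). coeff (pCons a p) i *\<^sub>R (P ^^ i) x)"
    by (rule op_poly_upto) (simp add: degree_pCons_le)
  also have "\<dots> = a *\<^sub>R x + (\<Sum>i\<le>degree p. coeff p i *\<^sub>R (P ^^ Suc i) x)"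
    by (subst sum.atMost_Suc_shift) simp
  also have "(\<Sum>i\<le>degree p. coeff p i *\<^sub>R (P ^^ Suc i) x) = P (op_poly p P x)"
    by (simp add: op_poly_def bounded_clinear_sum[OF P] bounded_clinear_scaleR[OF P])
  finally show ?thesis .
qed

lemma op_poly_X: "bounded_clinear P \<Longrightarrow> op_poly [:0, 1:] P x = P x"
  by (simp add: op_poly_pCons op_poly_const bounded_clinear_scaleR bounded_clinear_zero)

lemma op_poly_mult:
  assumes P: "bounded_clinear P"
  shows "op_poly (p * q) P x = op_poly p P (op_poly q P x)"
proof (induction p arbitrary: x)
  case (pCons a p)
  have "pCons a p * q = smult a q + pCons 0 (p * q)" by simp
  then show ?case by (simp add: op_poly_add op_poly_smult op_poly_pCons[OF P] pCons.IH)
qed simp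

lemma op_poly_commute:
  assumes P: "bounded_clinear P"
  shows "op_poly p P (P x) = P (op_poly p P x)"
  using op_poly_mult[OF P, of p "[:0,1:]" x] op_poly_mult[OF P, of "[:0,1:]" p x]
  by (simp add: op_poly_X[OF P] mult.commute)

lemma bounded_clinear_op_poly:
  assumes P: "bounded_clinear P"
  shows "bounded_clinear (op_poly p P)"
proof (induction p)
  case 0
  have "op_poly 0 P = (\<lambda>x. 0)" by (simp add: fun_eq_iff)
  then show ?case by (simp add: bounded_clinear_def)
next
  case (pCons a p)
  have e: "op_poly (pCons a p) P = (\<lambda>x. a *\<^sub>R x + P (op_poly p P x))"
    by (simp add: fun_eq_iff op_poly_pCons[OF P])
  have "bounded_linear (\<lambda>x. P (op_poly p P x))"
    using P pCons.IH by (simp add: bounded_clinear_def bounded_linear_compose)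
  then have "bounded_linear (op_poly (pCons a p) P)"
    unfolding e by (rule bounded_linear_add[OF bounded_linear_scaleR_right])
  moreover have "op_poly (pCons a p) P (scaleC c x) = scaleC c (op_poly (pCons a p) P x)" for c x
    using pCons.IH P
    by (simp add: e bounded_clinear_scaleC scaleR_scaleC scaleC_scaleC scaleC_add_right
        mult.commute)
  ultimately show ?case by (simp add: bounded_clinear_def)
qed

lemma selfadjoint_op_poly:
  assumes P: "bounded_clinear P" and sa: "selfadjoint P"
  shows "selfadjoint (op_poly p P)"
  unfolding selfadjoint_def
proof (induction p)
  case (pCons a p)
  have "cinner (op_poly (pCons a p) P x) y = cinner x (op_poly (pCons a p) P y)" for x y
  proof -
    have "cinner (op_poly (pCons a p) P x) y
        = of_real a * cinner x y + cinner (op_poly p P x) (P y)"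
      using sa by (simp add: op_poly_pCons[OF P] cinner_add_left cinner_scaleR_left selfadjoint_def)
    also have "\<dots> = cinner x (op_poly (pCons a p) P y)"
      using pCons.IH
      by (simp add: op_poly_pCons[OF P] cinner_add_right cinner_scaleR_right op_poly_commute[OF P])
    finally show ?thesis .
  qed
  then show ?case by blast
qed simp

lemma op_poly_of_zero_operator:
  assumes P: "bounded_clinear P" and z: "\<And>x. P x = 0"
  shows "op_poly p P x = poly p 0 *\<^sub>R x"
proof (induction p)
  case (pCons a p)
  show ?case using z[of "op_poly p P x"] by (simp add: op_poly_pCons[OF P])
qed simp

lemma poly_nonneg_Icc_of_Ioo:
  fixes q :: "real poly"
  assumes "a < b" and "\<And>t. a < t \<Longrightarrow> t < b \<Longrightarrow> 0 \<le> poly q t" and "a \<le> t" "t \<le> b"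
  shows "0 \<le> poly q t"
  using continuous_ge_on_closure[of "{a<..<b}" "poly q" t 0] assms
    continuous_on_poly[OF continuous_on_id]
  by auto

text \<open>\<open>q1\<close> changes sign at the interior point \<open>t0\<close>, so \<open>t0\<close> is a root of \<open>q1\<close> as well.\<close>

lemma poly_nonneg_Icc_interior_root:
  fixes q1 :: "real poly"
  assumes t0: "0 < t0" "t0 < c" and nn: "\<And>t. 0 \<le> t \<Longrightarrow> t \<le> c \<Longrightarrow> 0 \<le> (t - t0) * poly q1 t"
    and q1: "q1 \<noteq> 0"
  obtains q2 where "q1 = [:-t0,1:] * q2" and "degree q2 < degree q1"
    and "\<And>t. 0 \<le> t \<Longrightarrow> t \<le> c \<Longrightarrow> 0 \<le> poly q2 t"
proof -
  have right: "0 \<le> poly q1 t" if "t0 < t" "t < c" for t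
    using nn[of t] that t0 by (simp add: zero_le_mult_iff)
  have left: "0 \<le> poly (- q1) t" if "0 < t" "t < t0" for t
    using nn[of t] that t0 by (simp add: zero_le_mult_iff)
  have "poly q1 t0 = 0"
    using poly_nonneg_Icc_of_Ioo[of t0 c q1 t0, OF _ right]
      poly_nonneg_Icc_of_Ioo[of 0 t0 "- q1" t0, OF _ left] t0
    by simp
  then obtain q2 where q2: "q1 = [:-t0,1:] * q2"
    by (auto simp: poly_eq_0_iff_dvd dvd_def)
  then have "q2 \<noteq> 0" using q1 by auto
  then have "degree q2 < degree q1" unfolding q2 by (subst degree_mult_eq) auto
  have pos: "0 \<le> poly q2 t" if "0 \<le> t" "t \<le> c" "t \<noteq> t0" for t
  proof -
    have "0 \<le> (t - t0)\<^sup>2 * poly q2 t"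
      using nn[OF that(1,2)] by (simp add: q2 power2_eq_square algebra_simps)
    moreover have "0 < (t - t0)\<^sup>2" using that(3) by simp
    ultimately show ?thesis by (simp add: zero_le_mult_iff)
  qed
  have "0 \<le> poly q2 t" if "0 \<le> t" "t \<le> t0" for t
    using poly_nonneg_Icc_of_Ioo[of 0 t0 q2 t] pos t0 that by force
  moreover have "0 \<le> poly q2 t" if "t0 \<le> t" "t \<le> c" for t
    using poly_nonneg_Icc_of_Ioo[of t0 c q2 t] pos t0 that by force
  ultimately show ?thesis
    using that[OF q2 \<open>degree q2 < degree q1\<close>] by (meson linear)
qed

lemma poly_nonneg_Icc_root_factor:
  fixes q :: "real poly"
  assumes c: "0 < c" and nn: "\<And>t. 0 \<le> t \<Longrightarrow> t \<le> c \<Longrightarrow> 0 \<le> poly q t"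
    and t0: "0 \<le> t0" "t0 \<le> c" and root: "poly q t0 = 0" and q: "q \<noteq> 0"
  obtains q1 where "degree q1 < degree q" and "\<And>t. 0 \<le> t \<Longrightarrow> t \<le> c \<Longrightarrow> 0 \<le> poly q1 t"
    and "q = [:0,1:] * q1 \<or> q = [:c,-1:] * q1 \<or> q = [:-t0,1:] * [:-t0,1:] * q1"
proof -
  obtain q1 where q1: "q = [:-t0,1:] * q1" using root by (auto simp: poly_eq_0_iff_dvd dvd_def)
  then have "q1 \<noteq> 0" using q by auto
  then have dq1: "degree q1 < degree q" unfolding q1 by (subst degree_mult_eq) auto
  have pq: "poly q t = (t - t0) * poly q1 t" for t by (simp add: q1 algebra_simps)
  consider "t0 = 0" | "t0 = c" | "0 < t0" "t0 < c" using t0 by fastforce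
  then show ?thesis
  proof cases
    case 1
    have "0 \<le> poly q1 t" if "0 < t" "t < c" for t
      using nn[of t] pq[of t] that 1 by (simp add: zero_le_mult_iff)
    then have "0 \<le> poly q1 t" if "0 \<le> t" "t \<le> c" for t
      using poly_nonneg_Icc_of_Ioo[OF c] that by blast
    then show ?thesis using that dq1 q1 1 by simp
  next
    case 2
    have "0 \<le> poly (- q1) t" if "0 < t" "t < c" for t
      using nn[of t] pq[of t] that 2 by (simp add: zero_le_mult_iff)
    then have "0 \<le> poly (- q1) t" if "0 \<le> t" "t \<le> c" for t
      using poly_nonneg_Icc_of_Ioo[OF c] that by blast
    moreover have "q = [:c,-1:] * (- q1)" using q1 2 by simp
    ultimately show ?thesis using that[of "- q1"] dq1 by simp
  next
    case 3
    obtain q2 where q2: "q1 = [:-t0,1:] * q2" and "degree q2 < degree q1"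
      and q2nn: "\<And>t. 0 \<le> t \<Longrightarrow> t \<le> c \<Longrightarrow> 0 \<le> poly q2 t"
      using poly_nonneg_Icc_interior_root[OF 3] nn pq \<open>q1 \<noteq> 0\<close> by metis
    then have "degree q2 < degree q" using dq1 by simp
    moreover have "q = [:-t0,1:] * [:-t0,1:] * q2" using q1 q2 by (simp only: mult.assoc)
    ultimately show ?thesis using that[of q2] q2nn by blast
  qed
qed

definition poly_op_nonneg :: "('a::complex_inner \<Rightarrow> 'a) \<Rightarrow> real poly \<Rightarrow> bool" where
  "poly_op_nonneg P q \<longleftrightarrow> (\<forall>x. 0 \<le> Re (cinner (op_poly q P x) x))"

lemma poly_op_nonneg_add: "poly_op_nonneg P p \<Longrightarrow> poly_op_nonneg P q \<Longrightarrow> poly_op_nonneg P (p + q)"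
  by (simp add: poly_op_nonneg_def op_poly_add cinner_add_left)

lemma poly_op_nonneg_smult: "poly_op_nonneg P p \<Longrightarrow> 0 \<le> a \<Longrightarrow> poly_op_nonneg P (smult a p)"
  by (simp add: poly_op_nonneg_def op_poly_smult cinner_scaleR_left)

lemma poly_op_nonneg_square_mult:
  assumes P: "positive_op P" and q: "poly_op_nonneg P q"
  shows "poly_op_nonneg P (s * s * q)"
proof -
  have bc: "bounded_clinear P" and sa: "selfadjoint P" using P by (auto simp: positive_op_def)
  have "op_poly (s * s * q) P x = op_poly s P (op_poly q P (op_poly s P x))" for x
    by (simp only: op_poly_mult[OF bc, symmetric] mult_ac)
  then have "cinner (op_poly (s * s * q) P x) x
      = cinner (op_poly q P (op_poly s P x)) (op_poly s P x)" for x
    using selfadjoint_op_poly[OF bc sa, of s] by (simp add: selfadjoint_def)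
  then show ?thesis using q by (simp add: poly_op_nonneg_def)
qed

lemma square_weights_mult_closed:
  fixes a b :: "'a::comm_ring_1"
  assumes "w \<in> {1, a, b, a * b}" and "l \<in> {a, b}"
  shows "\<exists>s w'. w' \<in> {1, a, b, a * b} \<and> w * l = s * s * w'"
  using assms by (auto; metis mult_1_left mult_1_right mult.commute mult.left_commute)

definition interval_weights :: "real \<Rightarrow> real poly set" where
  "interval_weights c = {1, [:0,1:], [:c,-1:], [:0,1:] * [:c,-1:]}"

lemma poly_op_nonneg_interval_weights:
  assumes P: "positive_op P" and c: "onorm P \<le> c"
    and w: "w \<in> interval_weights c"
  shows "poly_op_nonneg P w"
proof -
  have bc: "bounded_clinear P" and sa: "selfadjoint P" and pos: "\<And>x. 0 \<le> Re (cinner (P x) x)"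
    using P by (auto simp: positive_op_def)
  have cX: "op_poly [:c,-1:] P x = c *\<^sub>R x - P x" for x
    using bc by (simp add: op_poly_pCons op_poly_const bounded_clinear_scaleR bounded_clinear_minus)
  have "Re (cinner (P x) x) \<le> c * (norm x)\<^sup>2" for x
    using Re_cinner_le_onorm_power2[OF bounded_clinear_imp_bounded_linear[OF bc], of x] c
    by (meson mult_right_mono order_trans zero_le_power2)
  then have c1: "0 \<le> Re (cinner (op_poly [:c,-1:] P x) x)" for x
    by (simp add: cX cinner_diff_left cinner_scaleR_left cinner_self_real)
  have "(norm (P x))\<^sup>2 \<le> c * Re (cinner (P x) x)" for x
    using positive_op_norm_power2_le[OF P, of x] c pos[of x] by (meson mult_right_mono order_trans)
  moreover have "op_poly ([:0,1:] * [:c,-1:]) P x = c *\<^sub>R P x - P (P x)" for x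
    by (simp only: op_poly_mult[OF bc] op_poly_X[OF bc] cX)
      (simp add: bounded_clinear_diff[OF bc] bounded_clinear_scaleR[OF bc])
  moreover have "cinner (P (P x)) x = cinner (P x) (P x)" for x
    using sa by (simp add: selfadjoint_def)
  ultimately have c2: "0 \<le> Re (cinner (op_poly ([:0,1:] * [:c,-1:]) P x) x)" for x
    by (simp add: cinner_diff_left cinner_scaleR_left cinner_self_real)
  show ?thesis
    using w c1 c2 pos
    by (auto simp: interval_weights_def poly_op_nonneg_def op_poly_1 op_poly_X[OF bc] Re_cinner_self)
qed

text \<open>Positivity of \<open>q(P)\<close> is not preserved under multiplication of \<open>q\<close> by \<open>X\<close> or \<open>c - X\<close>
  alone; the stronger invariant below, closed under both, is what makes the induction on the
  degree work.\<close>

definition weighted_nonneg :: "('a::complex_inner \<Rightarrow> 'a) \<Rightarrow> real \<Rightarrow> real poly \<Rightarrow> bool" where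
  "weighted_nonneg P c q \<longleftrightarrow>
     (\<forall>s. \<forall>w\<in>interval_weights c. poly_op_nonneg P (s * s * w * q))"

lemma weighted_nonneg_mult_weight:
  assumes q: "weighted_nonneg P c q" and l: "l \<in> {[:0,1:], [:c,-1:]}"
  shows "weighted_nonneg P c (l * q)"
  unfolding weighted_nonneg_def
proof (intro allI ballI)
  fix s w assume "w \<in> interval_weights c"
  then obtain s' w' where w': "w' \<in> interval_weights c" "w * l = s' * s' * w'"
    using square_weights_mult_closed[OF _ l] unfolding interval_weights_def by blast
  have "s * s * w * (l * q) = s * s * (w * l) * q" by (simp only: mult_ac)
  also have "\<dots> = s * s * (s' * s' * w') * q" by (simp only: w'(2))
  also have "\<dots> = (s * s') * (s * s') * w' * q" by (simp only: mult_ac)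
  moreover have "poly_op_nonneg P ((s * s') * (s * s') * w' * q)"
    using q w'(1) unfolding weighted_nonneg_def by blast
  ultimately show "poly_op_nonneg P (s * s * w * (l * q))" by (simp only:)
qed

lemma weighted_nonneg_square_mult:
  assumes "weighted_nonneg P c q"
  shows "weighted_nonneg P c (r * r * q)"
  unfolding weighted_nonneg_def
proof (intro allI ballI)
  fix s w assume "w \<in> interval_weights c"
  then have "poly_op_nonneg P ((s * r) * (s * r) * w * q)"
    using assms unfolding weighted_nonneg_def by blast
  moreover have "s * s * w * (r * r * q) = (s * r) * (s * r) * w * q" by (simp only: mult_ac)
  ultimately show "poly_op_nonneg P (s * s * w * (r * r * q))" by (simp only:)
qed

lemma weighted_nonneg_add:
  "weighted_nonneg P c p \<Longrightarrow> weighted_nonneg P c q \<Longrightarrow> weighted_nonneg P c (p + q)"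
  by (simp add: weighted_nonneg_def distrib_left poly_op_nonneg_add)

lemma weighted_nonneg_const:
  assumes P: "positive_op P" and c: "onorm P \<le> c" and a: "0 \<le> a"
  shows "weighted_nonneg P c [:a:]"
  unfolding weighted_nonneg_def
proof (intro allI ballI)
  fix s w assume "w \<in> interval_weights c"
  then have "poly_op_nonneg P (smult a (s * s * w))"
    by (intro poly_op_nonneg_smult poly_op_nonneg_square_mult[OF P]
        poly_op_nonneg_interval_weights[OF P c] a)
  then show "poly_op_nonneg P (s * s * w * [:a:])" by simp
qed

lemma weighted_nonneg_of_poly_nonneg:
  assumes P: "positive_op P" and c: "onorm P \<le> c" "0 < c"
  shows "(\<And>t. 0 \<le> t \<Longrightarrow> t \<le> c \<Longrightarrow> 0 \<le> poly q t) \<Longrightarrow> weighted_nonneg P c q"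
proof (induction "degree q" arbitrary: q rule: less_induct)
  case (less q)
  have "\<exists>t0\<in>{0..c}. \<forall>t\<in>{0..c}. poly q t0 \<le> poly q t"
    using c by (intro continuous_attains_inf compact_Icc continuous_on_poly continuous_on_id) auto
  then obtain t0 where t0: "0 \<le> t0" "t0 \<le> c" and tmin: "\<forall>t\<in>{0..c}. poly q t0 \<le> poly q t"
    by auto
  define q' where "q' = q - [:poly q t0:]"
  have q'nn: "0 \<le> poly q' t" if "0 \<le> t" "t \<le> c" for t using tmin that by (simp add: q'_def)
  have "weighted_nonneg P c q'"
  proof (cases "q' = 0")
    case True
    then show ?thesis using weighted_nonneg_const[OF P c(1), of 0] by simp
  next
    case False
    obtain q1 where dq1: "degree q1 < degree q'" and q1nn: "\<And>t. 0 \<le> t \<Longrightarrow> t \<le> c \<Longrightarrow> 0 \<le> poly q1 t"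
      and q1: "q' = [:0,1:] * q1 \<or> q' = [:c,-1:] * q1 \<or> q' = [:-t0,1:] * [:-t0,1:] * q1"
      using poly_nonneg_Icc_root_factor[OF c(2) q'nn t0] False by (auto simp: q'_def)
    have "degree q' \<le> degree q" unfolding q'_def by (rule degree_diff_le) simp_all
    then have "weighted_nonneg P c q1"
      using dq1 by (intro less.hyps[of q1, OF _ q1nn]) simp_all
    with q1 show ?thesis
      by (elim disjE)
        (simp_all only: weighted_nonneg_mult_weight weighted_nonneg_square_mult insertI1 insertI2)
  qed
  moreover have "weighted_nonneg P c [:poly q t0:]"
    using less.prems t0 by (intro weighted_nonneg_const[OF P c(1)]) simp
  ultimately have "weighted_nonneg P c (q' + [:poly q t0:])" by (rule weighted_nonneg_add)
  then show ?case by (simp add: q'_def)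
qed

lemma poly_op_nonneg_of_poly_nonneg:
  assumes P: "positive_op P" and c: "onorm P \<le> c" "0 < c"
    and nn: "\<And>t. 0 \<le> t \<Longrightarrow> t \<le> c \<Longrightarrow> 0 \<le> poly q t"
  shows "poly_op_nonneg P q"
proof -
  have "poly_op_nonneg P (1 * 1 * 1 * q)"
    using weighted_nonneg_of_poly_nonneg[OF P c nn]
    unfolding weighted_nonneg_def interval_weights_def by blast
  then show ?thesis by simp
qed

lemma norm_op_poly_le:
  assumes P: "positive_op P" and M: "\<And>t. t \<in> {0..onorm P} \<Longrightarrow> \<bar>poly p t\<bar> \<le> M"
  shows "norm (op_poly p P x) \<le> M * norm x"
proof -
  have bc: "bounded_clinear P" and sa: "selfadjoint P" using P by (auto simp: positive_op_def)
  have op0: "0 \<le> onorm P" by (intro onorm_pos_le bounded_clinear_imp_bounded_linear[OF bc])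
  then have M0: "\<bar>poly p 0\<bar> \<le> M" using M[of 0] by simp
  show ?thesis
  proof (cases "onorm P = 0")
    case True
    then have "\<And>x. P x = 0" using onorm_eq_0[OF bounded_clinear_imp_bounded_linear[OF bc]] by simp
    then show ?thesis using M0 by (simp add: op_poly_of_zero_operator[OF bc] mult_right_mono)
  next
    case False
    \<comment> \<open>\<open>M\<^sup>2 - p\<^sup>2\<close> is nonnegative on \<open>[0, \<parallel>P\<parallel>]\<close>, so \<open>M\<^sup>2 - p(P)\<^sup>2\<close> is a positive operator.\<close>
    define q where "q = [:M\<^sup>2:] - p * p"
    have "poly_op_nonneg P q"
    proof (rule poly_op_nonneg_of_poly_nonneg[OF P order_refl])
      show "0 < onorm P" using op0 False by simp
      fix t assume "0 \<le> t" "t \<le> onorm P"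
      then have "\<bar>poly p t\<bar>\<^sup>2 \<le> M\<^sup>2" using M by (intro power_mono) auto
      then show "0 \<le> poly q t" by (simp add: q_def power2_eq_square)
    qed
    then have "0 \<le> Re (cinner (op_poly q P x) x)" by (simp add: poly_op_nonneg_def)
    moreover have "op_poly q P x = M\<^sup>2 *\<^sub>R x - op_poly p P (op_poly p P x)"
      by (simp add: q_def op_poly_diff op_poly_const op_poly_mult[OF bc])
    moreover have "cinner (op_poly p P (op_poly p P x)) x = cinner (op_poly p P x) (op_poly p P x)"
      using selfadjoint_op_poly[OF bc sa, of p] unfolding selfadjoint_def by simp
    ultimately have "(norm (op_poly p P x))\<^sup>2 \<le> (M * norm x)\<^sup>2"
      by (simp add: cinner_diff_left cinner_scaleR_left Re_cinner_self power_mult_distrib)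
    then show ?thesis by (rule power2_le_imp_le) (use M0 in simp)
  qed
qed

lemma norm_op_poly_diff_le:
  assumes "positive_op P" and "\<And>t. t \<in> {0..onorm P} \<Longrightarrow> \<bar>poly p t - poly q t\<bar> \<le> \<delta>"
  shows "norm (op_poly p P x - op_poly q P x) \<le> \<delta> * norm x"
  using norm_op_poly_le[OF assms(1), of "p - q" \<delta> x] assms(2) by (simp add: op_poly_diff)

section \<open>The continuous functional calculus\<close>

lemma poly_approx_seq:
  fixes f :: "real \<Rightarrow> real"
  assumes f: "continuous_on {a..b} f"
  obtains p :: "nat \<Rightarrow> real poly"
  where "\<And>n t. t \<in> {a..b} \<Longrightarrow> \<bar>f t - poly (p n) t\<bar> \<le> 1 / real (Suc n)"
proof -
  have "\<forall>n. \<exists>q::real poly. \<forall>t\<in>{a..b}. \<bar>f t - poly q t\<bar> \<le> 1 / real (Suc n)"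
  proof
    fix n
    obtain g where g: "real_polynomial_function g" "\<And>t. t \<in> {a..b} \<Longrightarrow> \<bar>f t - g t\<bar> < 1 / real (Suc n)"
      using Stone_Weierstrass_real_polynomial_function[OF compact_Icc f, of "1 / real (Suc n)"]
      by auto
    obtain c k where "g = (\<lambda>t. \<Sum>i\<le>k. c i * t ^ i)"
      using g(1) real_polynomial_function_iff_sum by blast
    then have "poly (\<Sum>i\<le>k. monom (c i) i) t = g t" for t by (simp add: poly_sum poly_monom)
    then have "\<forall>t\<in>{a..b}. \<bar>f t - poly (\<Sum>i\<le>k. monom (c i) i) t\<bar> \<le> 1 / real (Suc n)"
      using g(2) by (simp add: less_imp_le)
    then show "\<exists>q::real poly. \<forall>t\<in>{a..b}. \<bar>f t - poly q t\<bar> \<le> 1 / real (Suc n)" by blast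
  qed
  from choice[OF this] obtain p where "\<forall>n. \<forall>t\<in>{a..b}. \<bar>f t - poly (p n) t\<bar> \<le> 1 / real (Suc n)"
    by blast
  then show ?thesis using that by blast
qed

lemma continuous_on_Icc_abs_bounded:
  fixes f :: "real \<Rightarrow> real"
  assumes "continuous_on {a..b} f"
  obtains B where "\<And>t. t \<in> {a..b} \<Longrightarrow> \<bar>f t\<bar> \<le> B"
proof -
  obtain B where "\<forall>y\<in>f ` {a..b}. norm y \<le> B"
    using compact_imp_bounded[OF compact_continuous_image[OF assms compact_Icc]]
    by (auto simp: bounded_iff)
  then have "\<And>t. t \<in> {a..b} \<Longrightarrow> \<bar>f t\<bar> \<le> B" by simp
  then show ?thesis by (rule that)
qed

lemma uniform_limit_of_rate:
  fixes F :: "nat \<Rightarrow> 'a \<Rightarrow> real"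
  assumes K: "0 \<le> K" and rate: "\<And>n t. t \<in> S \<Longrightarrow> \<bar>h t - F n t\<bar> \<le> K / real (Suc n)"
  shows "uniform_limit S F h sequentially"
proof (rule uniform_limitI)
  fix e :: real assume "0 < e"
  then have "\<forall>\<^sub>F n in sequentially. K / real (Suc n) < e"
    using order_tendstoD(2)[OF LIMSEQ_Suc[OF lim_const_over_n[of K]]] by simp
  then show "\<forall>\<^sub>F n in sequentially. \<forall>t\<in>S. dist (F n t) (h t) < e"
    by eventually_elim (auto simp: dist_real_def abs_minus_commute intro: le_less_trans[OF rate])
qed

definition is_fcalc :: "(real \<Rightarrow> real) \<Rightarrow> ('a::complex_inner \<Rightarrow> 'a) \<Rightarrow> ('a \<Rightarrow> 'a) \<Rightarrow> bool" where
  "is_fcalc f P T \<longleftrightarrow> bounded_clinear T \<and>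
     (\<forall>p :: nat \<Rightarrow> real poly. uniform_limit {0..onorm P} (\<lambda>n t. poly (p n) t) f sequentially
        \<longrightarrow> (\<lambda>n. onorm (\<lambda>x. op_poly (p n) P x - T x)) \<longlonglongrightarrow> 0)"

lemma fcalc_eq_The: "fcalc f P = (THE T. is_fcalc f P T)"
  by (simp add: fcalc_def is_fcalc_def)

lemma op_poly_tendsto_of_onorm:
  assumes P: "bounded_clinear P" and T: "bounded_clinear T"
    and lim: "(\<lambda>n. onorm (\<lambda>x. op_poly (p n) P x - T x)) \<longlonglongrightarrow> 0"
  shows "(\<lambda>n. op_poly (p n) P x) \<longlonglongrightarrow> T x"
proof -
  have "bounded_linear (\<lambda>x. op_poly (p n) P x - T x)" for n
    by (intro bounded_linear_sub bounded_clinear_imp_bounded_linear bounded_clinear_op_poly P T)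
  then have "(\<lambda>n. op_poly (p n) P x - T x) \<longlonglongrightarrow> 0"
    by (intro Lim_null_comparison[OF _ tendsto_mult_left_zero[OF lim, of "norm x"]]
        always_eventually allI onorm)
  then show ?thesis by (simp add: LIM_zero_iff)
qed

lemma bounded_linear_scaleC: "bounded_linear (\<lambda>u::'a::complex_inner. scaleC c u)"
  by (rule bounded_linear_intro[where K = "cmod c"])
    (simp_all add: scaleC_add_right scaleR_scaleC scaleC_scaleC mult.commute norm_scaleC)

lemma bounded_clinear_pointwise_limit:
  assumes T: "\<And>n. bounded_clinear (T n)" and lim: "\<And>x. (\<lambda>n. T n x) \<longlonglongrightarrow> S x"
    and bound: "\<And>x. norm (S x) \<le> K * norm x"
  shows "bounded_clinear S"
proof -
  have add: "S (x + y) = S x + S y" for x y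
    using LIMSEQ_unique[OF lim[of "x + y"]] tendsto_add[OF lim[of x] lim[of y]]
    by (simp add: bounded_clinear_add[OF T])
  have scaleC: "S (scaleC c x) = scaleC c (S x)" for c x
    using LIMSEQ_unique[OF lim[of "scaleC c x"]]
      bounded_linear.tendsto[OF bounded_linear_scaleC lim[of x]]
    by (simp add: bounded_clinear_scaleC[OF T])
  have "bounded_linear S"
  proof (rule bounded_linear_intro[OF add])
    show "S (r *\<^sub>R x) = r *\<^sub>R S x" for r x by (simp add: scaleR_scaleC scaleC)
    show "norm (S x) \<le> norm x * K" for x using bound[of x] by (simp add: mult.commute)
  qed
  then show ?thesis using scaleC by (simp add: bounded_clinear_def)
qed

lemma norm_op_poly_diff_limit_le:
  assumes P: "positive_op P"
    and p: "\<And>n t. t \<in> {0..onorm P} \<Longrightarrow> \<bar>f t - poly (p n) t\<bar> \<le> 1 / real (Suc n)"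
    and lim: "(\<lambda>n. op_poly (p n) P x) \<longlonglongrightarrow> y"
    and q: "\<And>t. t \<in> {0..onorm P} \<Longrightarrow> \<bar>poly q t - f t\<bar> \<le> \<delta>"
  shows "norm (op_poly q P x - y) \<le> \<delta> * norm x"
proof (rule tendsto_le[OF _ _ tendsto_norm[OF tendsto_diff[OF tendsto_const lim]]])
  show "(\<lambda>n. (\<delta> + 1 / real (Suc n)) * norm x) \<longlonglongrightarrow> \<delta> * norm x"
    using tendsto_mult_right[OF tendsto_add[OF tendsto_const LIMSEQ_Suc[OF lim_1_over_n]],
        of \<delta> "norm x"]
    by simp
  have "norm (op_poly q P x - op_poly (p n) P x) \<le> (\<delta> + 1 / real (Suc n)) * norm x" for n
  proof (rule norm_op_poly_diff_le[OF P])
    fix t assume t: "t \<in> {0..onorm P}"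
    show "\<bar>poly q t - poly (p n) t\<bar> \<le> \<delta> + 1 / real (Suc n)" using p[OF t, of n] q[OF t] by arith
  qed
  then show "\<forall>\<^sub>F n in sequentially.
      norm (op_poly q P x - op_poly (p n) P x) \<le> (\<delta> + 1 / real (Suc n)) * norm x"
    by simp
qed simp

lemma op_poly_Cauchy:
  assumes P: "positive_op P"
    and p: "\<And>n t. t \<in> {0..onorm P} \<Longrightarrow> \<bar>f t - poly (p n) t\<bar> \<le> 1 / real (Suc n)"
  shows "Cauchy (\<lambda>n. op_poly (p n) P x)"
proof (rule Cauchy_of_dist_le_vanishing)
  show "(\<lambda>n. norm x / real (Suc n)) \<longlonglongrightarrow> 0" by (rule LIMSEQ_Suc[OF lim_const_over_n])
  fix m n
  have "norm (op_poly (p m) P x - op_poly (p n) P x)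
      \<le> (1 / real (Suc m) + 1 / real (Suc n)) * norm x"
  proof (rule norm_op_poly_diff_le[OF P])
    fix t assume t: "t \<in> {0..onorm P}"
    show "\<bar>poly (p m) t - poly (p n) t\<bar> \<le> 1 / real (Suc m) + 1 / real (Suc n)"
      using p[OF t, of m] p[OF t, of n] by arith
  qed
  then show "dist (op_poly (p m) P x) (op_poly (p n) P x)
      \<le> norm x / real (Suc m) + norm x / real (Suc n)"
    by (simp add: dist_norm algebra_simps)
qed

lemma is_fcalcI:
  assumes P: "bounded_clinear P" and T: "bounded_clinear T"
    and approx: "\<And>q \<delta> x. (\<And>t. t \<in> {0..onorm P} \<Longrightarrow> \<bar>poly q t - f t\<bar> \<le> \<delta>) \<Longrightarrow>
      norm (op_poly q P x - T x) \<le> \<delta> * norm x"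
  shows "is_fcalc f P T"
  unfolding is_fcalc_def
proof (intro conjI T allI impI LIMSEQ_I)
  fix q :: "nat \<Rightarrow> real poly" and e :: real
  assume u: "uniform_limit {0..onorm P} (\<lambda>n t. poly (q n) t) f sequentially" and e: "0 < e"
  have "\<forall>\<^sub>F n in sequentially. \<forall>t\<in>{0..onorm P}. dist (poly (q n) t) (f t) < e / 2"
    using uniform_limitD[OF u, of "e / 2"] e by simp
  then obtain N where N: "\<forall>n\<ge>N. \<forall>t\<in>{0..onorm P}. dist (poly (q n) t) (f t) < e / 2"
    unfolding eventually_sequentially by blast
  have "norm (onorm (\<lambda>x. op_poly (q n) P x - T x)) < e" if "N \<le> n" for n
  proof -
    have "0 \<le> onorm (\<lambda>x. op_poly (q n) P x - T x)"
      by (intro onorm_pos_le bounded_linear_sub bounded_clinear_imp_bounded_linear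
          bounded_clinear_op_poly P T)
    moreover have "onorm (\<lambda>x. op_poly (q n) P x - T x) \<le> e / 2"
      using e N that by (intro onorm_bound approx) (auto simp: dist_real_def less_imp_le)
    ultimately show ?thesis using e by simp
  qed
  then show "\<exists>N. \<forall>n\<ge>N. norm (onorm (\<lambda>x. op_poly (q n) P x - T x) - 0) < e" by auto
qed

lemma fcalc_exists:
  fixes P :: "'a::chilbert_space \<Rightarrow> 'a"
  assumes P: "positive_op P" and f: "continuous_on {0..onorm P} f"
  shows "\<exists>T. is_fcalc f P T"
proof -
  have bc: "bounded_clinear P" using P by (simp add: positive_op_def)
  obtain p where p: "\<And>n t. t \<in> {0..onorm P} \<Longrightarrow> \<bar>f t - poly (p n) t\<bar> \<le> 1 / real (Suc n)"
    using poly_approx_seq[OF f] by blast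
  define T where "T x = lim (\<lambda>n. op_poly (p n) P x)" for x
  have lim: "(\<lambda>n. op_poly (p n) P x) \<longlonglongrightarrow> T x" for x
    using op_poly_Cauchy[OF P p] by (simp add: T_def Cauchy_convergent_iff convergent_LIMSEQ_iff)
  have approx: "norm (op_poly q P x - T x) \<le> \<delta> * norm x"
    if "\<And>t. t \<in> {0..onorm P} \<Longrightarrow> \<bar>poly q t - f t\<bar> \<le> \<delta>" for q \<delta> x
    by (rule norm_op_poly_diff_limit_le[OF P p lim that])
  have "bounded_clinear T"
  proof (rule bounded_clinear_pointwise_limit[OF bounded_clinear_op_poly[OF bc] lim])
    fix x
    have "norm (T x) \<le> norm (op_poly (p 0) P x) + norm (op_poly (p 0) P x - T x)"
      by (metis norm_minus_commute norm_triangle_sub)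
    also have "\<dots> \<le> onorm (op_poly (p 0) P) * norm x + 1 * norm x"
      using p[of _ 0]
      by (intro add_mono bounded_clinear_norm_le[OF bounded_clinear_op_poly[OF bc]] approx)
        (simp add: abs_minus_commute)
    finally show "norm (T x) \<le> (onorm (op_poly (p 0) P) + 1) * norm x"
      by (simp add: algebra_simps)
  qed
  then show ?thesis using is_fcalcI[OF bc _ approx] by blast
qed

lemma is_fcalc_unique:
  fixes P :: "'a::chilbert_space \<Rightarrow> 'a"
  assumes P: "positive_op P" and f: "continuous_on {0..onorm P} f"
    and T: "is_fcalc f P T" and T': "is_fcalc f P T'"
  shows "T = T'"
proof
  fix x
  have bc: "bounded_clinear P" using P by (simp add: positive_op_def)
  obtain p where "\<And>n t. t \<in> {0..onorm P} \<Longrightarrow> \<bar>f t - poly (p n) t\<bar> \<le> 1 / real (Suc n)"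
    using poly_approx_seq[OF f] by blast
  then have "uniform_limit {0..onorm P} (\<lambda>n t. poly (p n) t) f sequentially"
    by (intro uniform_limit_of_rate[of 1]) auto
  then have "(\<lambda>n. op_poly (p n) P x) \<longlonglongrightarrow> T x" and "(\<lambda>n. op_poly (p n) P x) \<longlonglongrightarrow> T' x"
    using T T' by (auto intro: op_poly_tendsto_of_onorm[OF bc] simp: is_fcalc_def)
  then show "T x = T' x" by (rule LIMSEQ_unique)
qed

lemma is_fcalc_fcalc:
  fixes P :: "'a::chilbert_space \<Rightarrow> 'a"
  assumes "positive_op P" and "continuous_on {0..onorm P} f"
  shows "is_fcalc f P (fcalc f P)"
  unfolding fcalc_eq_The using fcalc_exists[OF assms] is_fcalc_unique[OF assms]
  by (metis theI)

lemma bounded_clinear_fcalc: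
  fixes P :: "'a::chilbert_space \<Rightarrow> 'a"
  assumes "positive_op P" and "continuous_on {0..onorm P} f"
  shows "bounded_clinear (fcalc f P)"
  using is_fcalc_fcalc[OF assms] by (simp add: is_fcalc_def)

lemma fcalc_tendsto:
  fixes P :: "'a::chilbert_space \<Rightarrow> 'a"
  assumes P: "positive_op P" and f: "continuous_on {0..onorm P} f"
    and "uniform_limit {0..onorm P} (\<lambda>n t. poly (p n) t) f sequentially"
  shows "(\<lambda>n. op_poly (p n) P x) \<longlonglongrightarrow> fcalc f P x"
  using is_fcalc_fcalc[OF P f] assms(3) P
  by (intro op_poly_tendsto_of_onorm) (auto simp: is_fcalc_def positive_op_def)

lemma fcalc_approximants:
  fixes P :: "'a::chilbert_space \<Rightarrow> 'a"
  assumes P: "positive_op P" and f: "continuous_on {0..onorm P} f"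
  obtains p where "\<And>n t. t \<in> {0..onorm P} \<Longrightarrow> \<bar>f t - poly (p n) t\<bar> \<le> 1 / real (Suc n)"
    and "\<And>x. (\<lambda>n. op_poly (p n) P x) \<longlonglongrightarrow> fcalc f P x"
proof -
  obtain p where p: "\<And>n t. t \<in> {0..onorm P} \<Longrightarrow> \<bar>f t - poly (p n) t\<bar> \<le> 1 / real (Suc n)"
    using poly_approx_seq[OF f] by blast
  moreover have "(\<lambda>n. op_poly (p n) P x) \<longlonglongrightarrow> fcalc f P x" for x
    using p by (intro fcalc_tendsto[OF P f] uniform_limit_of_rate[of 1]) auto
  ultimately show ?thesis using that by blast
qed

lemma fcalc_eqI:
  fixes P :: "'a::chilbert_space \<Rightarrow> 'a"
  assumes P: "positive_op P" and h: "continuous_on {0..onorm P} h" and K: "0 \<le> K"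
    and rate: "\<And>n t. t \<in> {0..onorm P} \<Longrightarrow> \<bar>h t - poly (r n) t\<bar> \<le> K / real (Suc n)"
    and lim: "(\<lambda>n. op_poly (r n) P x) \<longlonglongrightarrow> v"
  shows "fcalc h P x = v"
  using fcalc_tendsto[OF P h uniform_limit_of_rate[OF K rate]] lim by (rule LIMSEQ_unique)

lemma fcalc_const:
  fixes P :: "'a::chilbert_space \<Rightarrow> 'a"
  assumes "positive_op P"
  shows "fcalc (\<lambda>t. a) P x = a *\<^sub>R x"
  by (rule fcalc_eqI[OF assms _ order_refl, where r = "\<lambda>n. [:a:]"]) (simp_all add: op_poly_const)

lemma fcalc_id:
  fixes P :: "'a::chilbert_space \<Rightarrow> 'a"
  assumes "positive_op P"
  shows "fcalc (\<lambda>t. t) P x = P x"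
  using assms
  by (intro fcalc_eqI[OF assms _ order_refl, where r = "\<lambda>n. [:0,1:]"])
    (simp_all add: op_poly_X positive_op_def continuous_on_id)

lemma fcalc_lin:
  fixes P :: "'a::chilbert_space \<Rightarrow> 'a"
  assumes P: "positive_op P"
    and f: "continuous_on {0..onorm P} f" and g: "continuous_on {0..onorm P} g"
  shows "fcalc (\<lambda>t. a * f t + b * g t) P x = a *\<^sub>R fcalc f P x + b *\<^sub>R fcalc g P x"
proof -
  obtain p where p: "\<And>n t. t \<in> {0..onorm P} \<Longrightarrow> \<bar>f t - poly (p n) t\<bar> \<le> 1 / real (Suc n)"
    and lp: "(\<lambda>n. op_poly (p n) P x) \<longlonglongrightarrow> fcalc f P x"
    using fcalc_approximants[OF P f] by metis
  obtain q where q: "\<And>n t. t \<in> {0..onorm P} \<Longrightarrow> \<bar>g t - poly (q n) t\<bar> \<le> 1 / real (Suc n)"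
    and lq: "(\<lambda>n. op_poly (q n) P x) \<longlonglongrightarrow> fcalc g P x"
    using fcalc_approximants[OF P g] by metis
  show ?thesis
  proof (rule fcalc_eqI[OF P _ _ _,
        where r = "\<lambda>n. smult a (p n) + smult b (q n)" and K = "\<bar>a\<bar> + \<bar>b\<bar>"])
    show "continuous_on {0..onorm P} (\<lambda>t. a * f t + b * g t)" by (intro continuous_intros f g)
    fix n t assume t: "t \<in> {0..onorm P}"
    have "\<bar>a * f t + b * g t - poly (smult a (p n) + smult b (q n)) t\<bar>
        \<le> \<bar>a\<bar> * \<bar>f t - poly (p n) t\<bar> + \<bar>b\<bar> * \<bar>g t - poly (q n) t\<bar>"
      by (simp add: abs_mult[symmetric] algebra_simps abs_triangle_ineq[THEN order_trans])
    also have "\<dots> \<le> (\<bar>a\<bar> + \<bar>b\<bar>) / real (Suc n)"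
      using mult_left_mono[OF p[OF t, of n], of "\<bar>a\<bar>"] mult_left_mono[OF q[OF t, of n], of "\<bar>b\<bar>"]
      by (simp add: add_divide_distrib)
    finally show "\<bar>a * f t + b * g t - poly (smult a (p n) + smult b (q n)) t\<bar>
        \<le> (\<bar>a\<bar> + \<bar>b\<bar>) / real (Suc n)" .
  next
    show "(\<lambda>n. op_poly (smult a (p n) + smult b (q n)) P x) \<longlonglongrightarrow> a *\<^sub>R fcalc f P x + b *\<^sub>R fcalc g P x"
      using tendsto_add[OF tendsto_scaleR[OF tendsto_const lp] tendsto_scaleR[OF tendsto_const lq]]
      by (simp add: op_poly_add op_poly_smult)
  qed simp
qed

lemma norm_fcalc_le:
  fixes P :: "'a::chilbert_space \<Rightarrow> 'a"
  assumes P: "positive_op P" and f: "continuous_on {0..onorm P} f"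
    and M: "\<And>t. t \<in> {0..onorm P} \<Longrightarrow> \<bar>f t\<bar> \<le> M"
  shows "norm (fcalc f P x) \<le> M * norm x"
proof -
  obtain p where p: "\<And>n t. t \<in> {0..onorm P} \<Longrightarrow> \<bar>f t - poly (p n) t\<bar> \<le> 1 / real (Suc n)"
    and lp: "(\<lambda>n. op_poly (p n) P x) \<longlonglongrightarrow> fcalc f P x"
    using fcalc_approximants[OF P f] by metis
  show ?thesis
  proof (rule tendsto_le[OF _ _ tendsto_norm[OF lp]])
    show "(\<lambda>n. (M + 1 / real (Suc n)) * norm x) \<longlonglongrightarrow> M * norm x"
      using tendsto_mult_right[OF tendsto_add[OF tendsto_const LIMSEQ_Suc[OF lim_1_over_n]],
          of M "norm x"]
      by simp
    have "norm (op_poly (p n) P x) \<le> (M + 1 / real (Suc n)) * norm x" for n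
      using p M by (intro norm_op_poly_le[OF P]) (smt (verit))
    then show "\<forall>\<^sub>F n in sequentially. norm (op_poly (p n) P x) \<le> (M + 1 / real (Suc n)) * norm x"
      by simp
  qed simp
qed

lemma norm_fcalc_diff_le:
  fixes P :: "'a::chilbert_space \<Rightarrow> 'a"
  assumes P: "positive_op P"
    and f: "continuous_on {0..onorm P} f" and g: "continuous_on {0..onorm P} g"
    and d: "\<And>t. t \<in> {0..onorm P} \<Longrightarrow> \<bar>f t - g t\<bar> \<le> \<delta>"
  shows "norm (fcalc f P x - fcalc g P x) \<le> \<delta> * norm x"
  using fcalc_lin[OF P f g, where a = 1 and b = "- 1" and x = x]
    norm_fcalc_le[OF P _ , of "\<lambda>t. 1 * f t + (- 1) * g t" \<delta> x] d
  by (simp add: continuous_intros f g)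

lemma fcalc_cong:
  assumes "\<And>t. t \<in> {0..onorm P} \<Longrightarrow> f t = g t"
  shows "fcalc f P = fcalc g P"
proof -
  have "uniform_limit {0..onorm P} h f F \<longleftrightarrow> uniform_limit {0..onorm P} h g F"
    for h and F :: "nat filter"
    using assms by (simp add: uniform_limit_iff)
  then show ?thesis by (simp add: fcalc_def)
qed

lemma selfadjoint_fcalc:
  fixes P :: "'a::chilbert_space \<Rightarrow> 'a"
  assumes P: "positive_op P" and f: "continuous_on {0..onorm P} f"
  shows "selfadjoint (fcalc f P)"
  unfolding selfadjoint_def
proof (intro allI)
  fix x y
  have bc: "bounded_clinear P" and sa: "selfadjoint P" using P by (auto simp: positive_op_def)
  obtain p where lp: "\<And>z. (\<lambda>n. op_poly (p n) P z) \<longlonglongrightarrow> fcalc f P z"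
    using fcalc_approximants[OF P f] by metis
  note cinner_tendsto =
    bounded_linear.tendsto[OF bounded_linear_cinner_left_comp[OF bounded_clinear_ident]]
  have "(\<lambda>n. cinner (op_poly (p n) P x) y) \<longlonglongrightarrow> cinner (fcalc f P x) y"
    by (rule cinner_tendsto[OF lp])
  moreover have "(\<lambda>n. cnj (cinner (op_poly (p n) P y) x)) \<longlonglongrightarrow> cnj (cinner (fcalc f P y) x)"
    by (intro tendsto_cnj cinner_tendsto[OF lp])
  moreover have "cnj (cinner (op_poly (p n) P y) x) = cinner (op_poly (p n) P x) y" for n
    using selfadjoint_op_poly[OF bc sa, of "p n"] cinner_commute[of x "op_poly (p n) P y"]
    by (simp add: selfadjoint_def)
  moreover have "cnj (cinner (fcalc f P y) x) = cinner x (fcalc f P y)"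
    using cinner_commute[of x "fcalc f P y"] by simp
  ultimately show "cinner (fcalc f P x) y = cinner x (fcalc f P y)"
    using LIMSEQ_unique by auto
qed

lemma fcalc_nonneg:
  fixes P :: "'a::chilbert_space \<Rightarrow> 'a"
  assumes P: "positive_op P" and f: "continuous_on {0..onorm P} f"
    and nn: "\<And>t. t \<in> {0..onorm P} \<Longrightarrow> 0 \<le> f t"
  shows "0 \<le> Re (cinner (fcalc f P x) x)"
proof -
  obtain B where B: "\<And>t. t \<in> {0..onorm P} \<Longrightarrow> \<bar>f t\<bar> \<le> B"
    using continuous_on_Icc_abs_bounded[OF f] by blast
  have "norm (fcalc f P x - fcalc (\<lambda>t. B / 2) P x) \<le> (B / 2) * norm x"
  proof (rule norm_fcalc_diff_le[OF P f continuous_on_const])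
    fix t assume t: "t \<in> {0..onorm P}"
    show "\<bar>f t - B / 2\<bar> \<le> B / 2" using B[OF t] nn[OF t] by arith
  qed
  then have bound: "norm (fcalc f P x - (B / 2) *\<^sub>R x) \<le> (B / 2) * norm x"
    by (simp add: fcalc_const[OF P])
  have "\<bar>Re (cinner (fcalc f P x - (B / 2) *\<^sub>R x) x)\<bar> \<le> cmod (cinner (fcalc f P x - (B / 2) *\<^sub>R x) x)"
    by (rule abs_Re_le_cmod)
  also have "\<dots> \<le> norm (fcalc f P x - (B / 2) *\<^sub>R x) * norm x" by (rule cmod_cinner_le)
  also have "\<dots> \<le> (B / 2) * norm x * norm x" using bound by (intro mult_right_mono) auto
  finally have "- ((B / 2) * norm x * norm x) \<le> Re (cinner (fcalc f P x - (B / 2) *\<^sub>R x) x)"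
    by (simp add: abs_le_iff)
  then show ?thesis
    by (simp add: cinner_diff_left cinner_scaleR_left Re_cinner_self power2_eq_square)
qed

lemma positive_op_fcalc:
  fixes P :: "'a::chilbert_space \<Rightarrow> 'a"
  assumes "positive_op P" and "continuous_on {0..onorm P} f"
    and "\<And>t. t \<in> {0..onorm P} \<Longrightarrow> 0 \<le> f t"
  shows "positive_op (fcalc f P)"
  unfolding positive_op_def
  using bounded_clinear_fcalc[OF assms(1,2)] selfadjoint_fcalc[OF assms(1,2)] fcalc_nonneg[OF assms]
  by blast

lemma op_poly_mult_tendsto:
  assumes P: "positive_op P" and K: "\<And>n t. t \<in> {0..onorm P} \<Longrightarrow> \<bar>poly (p n) t\<bar> \<le> K"
    and lp: "\<And>z. (\<lambda>n. op_poly (p n) P z) \<longlonglongrightarrow> S z" and lq: "(\<lambda>n. op_poly (q n) P x) \<longlonglongrightarrow> y"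
  shows "(\<lambda>n. op_poly (p n * q n) P x) \<longlonglongrightarrow> S y"
proof -
  have bc: "bounded_clinear P" using P by (simp add: positive_op_def)
  have "(\<lambda>n. op_poly (p n) P (op_poly (q n) P x) - op_poly (p n) P y) \<longlonglongrightarrow> 0"
  proof (rule Lim_null_comparison)
    show "\<forall>\<^sub>F n in sequentially. norm (op_poly (p n) P (op_poly (q n) P x) - op_poly (p n) P y)
        \<le> K * norm (op_poly (q n) P x - y)"
      using norm_op_poly_le[OF P K]
      by (simp add: bounded_clinear_diff[OF bounded_clinear_op_poly[OF bc], symmetric])
    show "(\<lambda>n. K * norm (op_poly (q n) P x - y)) \<longlonglongrightarrow> 0"
      using lq by (intro tendsto_mult_right_zero tendsto_norm_zero) (simp add: LIM_zero)
  qed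
  from tendsto_add[OF this lp[of y]] show ?thesis by (simp add: op_poly_mult[OF bc])
qed

lemma fcalc_mult:
  fixes P :: "'a::chilbert_space \<Rightarrow> 'a"
  assumes P: "positive_op P"
    and f: "continuous_on {0..onorm P} f" and g: "continuous_on {0..onorm P} g"
  shows "fcalc (\<lambda>t. f t * g t) P x = fcalc f P (fcalc g P x)"
proof -
  obtain p where p: "\<And>n t. t \<in> {0..onorm P} \<Longrightarrow> \<bar>f t - poly (p n) t\<bar> \<le> 1 / real (Suc n)"
    and lp: "\<And>z. (\<lambda>n. op_poly (p n) P z) \<longlonglongrightarrow> fcalc f P z"
    using fcalc_approximants[OF P f] by metis
  obtain q where q: "\<And>n t. t \<in> {0..onorm P} \<Longrightarrow> \<bar>g t - poly (q n) t\<bar> \<le> 1 / real (Suc n)"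
    and lq: "\<And>z. (\<lambda>n. op_poly (q n) P z) \<longlonglongrightarrow> fcalc g P z"
    using fcalc_approximants[OF P g] by metis
  obtain Bf Bg where Bf: "\<And>t. t \<in> {0..onorm P} \<Longrightarrow> \<bar>f t\<bar> \<le> Bf"
    and Bg: "\<And>t. t \<in> {0..onorm P} \<Longrightarrow> \<bar>g t\<bar> \<le> Bg"
    using continuous_on_Icc_abs_bounded[OF f] continuous_on_Icc_abs_bounded[OF g] by metis
  have p_bound: "\<bar>poly (p n) t\<bar> \<le> Bf + 1" if "t \<in> {0..onorm P}" for n t
  proof -
    have "1 / real (Suc n) \<le> 1" by simp
    then show ?thesis using p[OF that, of n] Bf[OF that] by arith
  qed
  show ?thesis
  proof (rule fcalc_eqI[OF P _ _ _ op_poly_mult_tendsto[OF P p_bound lp lq]])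
    show "continuous_on {0..onorm P} (\<lambda>t. f t * g t)" by (intro continuous_intros f g)
    have "0 \<in> {0..onorm P}"
      using P onorm_pos_le[of P] by (simp add: positive_op_def bounded_clinear_def)
    then show "0 \<le> Bf + Bg + 1" using Bf Bg by fastforce
    fix n t assume t: "t \<in> {0..onorm P}"
    have "\<bar>f t * g t - poly (p n * q n) t\<bar>
        = \<bar>(f t - poly (p n) t) * g t + poly (p n) t * (g t - poly (q n) t)\<bar>"
      by (simp add: algebra_simps)
    also have "\<dots> \<le> \<bar>f t - poly (p n) t\<bar> * \<bar>g t\<bar> + \<bar>poly (p n) t\<bar> * \<bar>g t - poly (q n) t\<bar>"
      by (metis abs_mult abs_triangle_ineq)
    also have "\<dots> \<le> 1 / real (Suc n) * Bg + (Bf + 1) * (1 / real (Suc n))"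
      by (intro add_mono mult_mono p[OF t] q[OF t] Bg[OF t] p_bound[OF t]) (use Bf[OF t] in auto)
    also have "\<dots> = (Bf + Bg + 1) / real (Suc n)" by (simp add: add_divide_distrib algebra_simps)
    finally show "\<bar>f t * g t - poly (p n * q n) t\<bar> \<le> (Bf + Bg + 1) / real (Suc n)" .
  qed
qed

lemma fcalc_quadratic:
  fixes Q :: "'a::chilbert_space \<Rightarrow> 'a"
  assumes Q: "positive_op Q"
  shows "fcalc (\<lambda>t. a * 1 + k * (t * t)) Q x = a *\<^sub>R x + k *\<^sub>R Q (Q x)"
proof -
  have "fcalc (\<lambda>t. a * 1 + k * (t * t)) Q x = a *\<^sub>R fcalc (\<lambda>t. 1) Q x + k *\<^sub>R fcalc (\<lambda>t. t * t) Q x"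
    by (rule fcalc_lin[OF Q]) (intro continuous_intros)+
  then show ?thesis
    using fcalc_mult[OF Q continuous_on_id continuous_on_id, of x] fcalc_id[OF Q]
      fcalc_const[OF Q, of 1 x]
    by simp
qed

lemma continuous_on_Icc_of_Ici:
  "continuous_on {a..} k \<Longrightarrow> continuous_on {a..b} (k::real \<Rightarrow> real)"
  by (rule continuous_on_subset) auto

lemma positive_op_fcalc_sqrt:
  fixes X :: "'a::chilbert_space \<Rightarrow> 'a"
  assumes "positive_op X"
  shows "positive_op (fcalc sqrt X)"
  by (rule positive_op_fcalc[OF assms]) (auto intro: continuous_intros)

lemma onorm_fcalc_sqrt_le:
  fixes X :: "'a::chilbert_space \<Rightarrow> 'a"
  assumes X: "positive_op X"
  shows "onorm (fcalc sqrt X) \<le> sqrt (onorm X)"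
proof (rule onorm_bound)
  show "0 \<le> sqrt (onorm X)"
    using X onorm_pos_le[of X] by (simp add: positive_op_def bounded_clinear_def)
  show "norm (fcalc sqrt X x) \<le> sqrt (onorm X) * norm x" for x
    by (rule norm_fcalc_le[OF X]) (auto intro: continuous_intros)
qed

lemma op_poly_fcalc_sqrt:
  fixes X :: "'a::chilbert_space \<Rightarrow> 'a"
  assumes X: "positive_op X"
  shows "op_poly q (fcalc sqrt X) y = fcalc (\<lambda>u. poly q (sqrt u)) X y"
proof (induction q arbitrary: y)
  case 0
  show ?case using fcalc_const[OF X, where a = 0] by simp
next
  case (pCons a q)
  have cont: "continuous_on {0..onorm X} (\<lambda>u. poly q (sqrt u))"
    "continuous_on {0..onorm X} (\<lambda>u. sqrt u * poly q (sqrt u))"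
    by (auto intro!: continuous_intros)
  have "op_poly (pCons a q) (fcalc sqrt X) y
      = a *\<^sub>R y + fcalc sqrt X (fcalc (\<lambda>u. poly q (sqrt u)) X y)"
    using positive_op_fcalc_sqrt[OF X] by (simp add: op_poly_pCons positive_op_def pCons.IH)
  also have "\<dots> = a *\<^sub>R fcalc (\<lambda>u. 1) X y + 1 *\<^sub>R fcalc (\<lambda>u. sqrt u * poly q (sqrt u)) X y"
    using fcalc_mult[OF X continuous_on_real_sqrt[OF continuous_on_id] cont(1)]
      fcalc_const[OF X, of 1]
    by simp
  also have "\<dots> = fcalc (\<lambda>u. a * 1 + 1 * (sqrt u * poly q (sqrt u))) X y"
    by (rule fcalc_lin[OF X continuous_on_const cont(2), symmetric])
  finally show ?case by simp
qed

lemma fcalc_fcalc_sqrt: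
  fixes X :: "'a::chilbert_space \<Rightarrow> 'a"
  assumes X: "positive_op X" and k: "continuous_on {0..} k"
  shows "fcalc k (fcalc sqrt X) y = fcalc (\<lambda>u. k (sqrt u)) X y"
proof -
  define S where "S = fcalc sqrt X"
  have S: "positive_op S" and Sn: "onorm S \<le> sqrt (onorm X)"
    using positive_op_fcalc_sqrt[OF X] onorm_fcalc_sqrt_le[OF X] by (simp_all add: S_def)
  obtain q where q: "\<And>n t. t \<in> {0..sqrt (onorm X)} \<Longrightarrow> \<bar>k t - poly (q n) t\<bar> \<le> 1 / real (Suc n)"
    using poly_approx_seq[OF continuous_on_Icc_of_Ici[OF k]] by blast
  have kX: "continuous_on {0..onorm X} (\<lambda>u. k (sqrt u))"
    by (rule continuous_on_compose2[OF k]) (auto intro: continuous_intros)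
  have "(\<lambda>n. op_poly (q n) S y) \<longlonglongrightarrow> fcalc k S y"
    using q Sn
    by (intro fcalc_tendsto[OF S continuous_on_Icc_of_Ici[OF k]] uniform_limit_of_rate[of 1]) auto
  moreover have "(\<lambda>n. fcalc (\<lambda>u. poly (q n) (sqrt u)) X y) \<longlonglongrightarrow> fcalc (\<lambda>u. k (sqrt u)) X y"
  proof (rule LIM_zero_cancel, rule Lim_null_comparison)
    show "\<forall>\<^sub>F n in sequentially.
        norm (fcalc (\<lambda>u. poly (q n) (sqrt u)) X y - fcalc (\<lambda>u. k (sqrt u)) X y)
        \<le> 1 / real (Suc n) * norm y"
    proof (intro always_eventually allI norm_fcalc_diff_le[OF X _ kX])
      fix n t assume "t \<in> {0..onorm X}"
      then have "sqrt t \<in> {0..sqrt (onorm X)}" by (auto simp: real_sqrt_le_iff)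
      from q[OF this, of n] show "\<bar>poly (q n) (sqrt t) - k (sqrt t)\<bar> \<le> 1 / real (Suc n)"
        by (simp add: abs_minus_commute)
    qed (auto intro!: continuous_intros)
    show "(\<lambda>n. 1 / real (Suc n) * norm y) \<longlonglongrightarrow> 0"
      by (rule tendsto_mult_left_zero[OF LIMSEQ_Suc[OF lim_const_over_n]])
  qed
  ultimately show ?thesis using LIMSEQ_unique by (simp add: S_def op_poly_fcalc_sqrt[OF X])
qed

lemma op_poly_intertwining:
  fixes A :: "'a::chilbert_space \<Rightarrow> 'a"
  assumes A: "bounded_clinear A"
  shows "A (op_poly p (\<lambda>x. adj A (A x)) x) = op_poly p (\<lambda>x. A (adj A x)) (A x)"
proof (induction p arbitrary: x)
  case (pCons a p)
  have "bounded_clinear (\<lambda>x. adj A (A x))" "bounded_clinear (\<lambda>x. A (adj A x))"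
    using bounded_clinear_compose bounded_clinear_adj[OF A] A by blast+
  then show ?case
    by (simp add: op_poly_pCons bounded_clinear_add[OF A] bounded_clinear_scaleR[OF A] pCons.IH)
qed (simp add: bounded_clinear_zero[OF A])

lemma fcalc_intertwining:
  fixes A :: "'a::chilbert_space \<Rightarrow> 'a"
  assumes A: "bounded_clinear A" and h: "continuous_on {0..} h"
  shows "A (fcalc h (\<lambda>x. adj A (A x)) x) = fcalc h (\<lambda>x. A (adj A x)) (A x)"
proof -
  define X where "X = (\<lambda>x. adj A (A x))"
  define Y where "Y = (\<lambda>x. A (adj A x))"
  have X: "positive_op X" and Y: "positive_op Y"
    unfolding X_def Y_def using positive_op_adj_comp[OF A] positive_op_comp_adj[OF A] .
  obtain p where p: "\<And>n t. t \<in> {0..max (onorm X) (onorm Y)} \<Longrightarrow>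
      \<bar>h t - poly (p n) t\<bar> \<le> 1 / real (Suc n)"
    using poly_approx_seq[OF continuous_on_Icc_of_Ici[OF h]] by blast
  have "(\<lambda>n. A (op_poly (p n) X x)) \<longlonglongrightarrow> A (fcalc h X x)"
    using p
    by (intro bounded_linear.tendsto[OF bounded_clinear_imp_bounded_linear[OF A]]
        fcalc_tendsto[OF X continuous_on_Icc_of_Ici[OF h]] uniform_limit_of_rate[of 1]) auto
  moreover have "(\<lambda>n. op_poly (p n) Y (A x)) \<longlonglongrightarrow> fcalc h Y (A x)"
    using p
    by (intro fcalc_tendsto[OF Y continuous_on_Icc_of_Ici[OF h]] uniform_limit_of_rate[of 1]) auto
  ultimately show ?thesis
    using LIMSEQ_unique by (simp add: X_def Y_def op_poly_intertwining[OF A])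
qed

section \<open>The mixed Schwarz inequality\<close>

lemma norm_power2_comp_fcalc_adj_comp_le:
  fixes A :: "'a::chilbert_space \<Rightarrow> 'a"
  assumes A: "bounded_clinear A" and \<psi>: "continuous_on {0..onorm (\<lambda>x. adj A (A x))} \<psi>"
    and M: "\<And>u. u \<in> {0..onorm (\<lambda>x. adj A (A x))} \<Longrightarrow> \<bar>\<psi> u * (u * \<psi> u)\<bar> \<le> M"
  shows "(norm (A (fcalc \<psi> (\<lambda>x. adj A (A x)) z)))\<^sup>2 \<le> M * (norm z)\<^sup>2"
proof -
  define X where "X = (\<lambda>x. adj A (A x))"
  have X: "positive_op X" unfolding X_def by (rule positive_op_adj_comp[OF A])
  have \<psi>': "continuous_on {0..onorm X} \<psi>" using \<psi> by (simp add: X_def)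
  have c2: "continuous_on {0..onorm X} (\<lambda>u. u * \<psi> u)" by (intro continuous_intros \<psi>')
  have c3: "continuous_on {0..onorm X} (\<lambda>u. \<psi> u * (u * \<psi> u))" by (intro continuous_intros \<psi>')
  define w where "w = fcalc \<psi> X z"
  have "(norm (A w))\<^sup>2 = Re (cinner (X w) w)"
    by (simp add: Re_cinner_self[symmetric] X_def cinner_adj_left[OF A])
  also have "X w = fcalc (\<lambda>u. u * \<psi> u) X z"
    using fcalc_mult[OF X continuous_on_id \<psi>', of z] fcalc_id[OF X, of w] by (simp add: w_def)
  also have "cinner (fcalc (\<lambda>u. u * \<psi> u) X z) w = cinner (fcalc (\<lambda>u. \<psi> u * (u * \<psi> u)) X z) z"
    using selfadjoint_fcalc[OF X \<psi>'] fcalc_mult[OF X \<psi>' c2] by (simp add: selfadjoint_def w_def)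
  also have "Re \<dots> \<le> norm (fcalc (\<lambda>u. \<psi> u * (u * \<psi> u)) X z) * norm z"
    using complex_Re_le_cmod order_trans cmod_cinner_le by blast
  also have "\<dots> \<le> M * norm z * norm z"
    using M by (intro mult_right_mono norm_fcalc_le[OF X c3]) (auto simp: X_def)
  finally show ?thesis by (simp add: w_def X_def power2_eq_square ac_simps)
qed

lemma norm_comp_fcalc_regularized_le:
  fixes A :: "'a::chilbert_space \<Rightarrow> 'a"
  assumes A: "bounded_clinear A" and e: "0 < e"
  shows "norm (A (fcalc (\<lambda>u. a / (sqrt u + e)) (\<lambda>x. adj A (A x)) z)) \<le> \<bar>a\<bar> * norm z"
proof -
  have "(norm (A (fcalc (\<lambda>u. a / (sqrt u + e)) (\<lambda>x. adj A (A x)) z)))\<^sup>2 \<le> a\<^sup>2 * (norm z)\<^sup>2"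
  proof (rule norm_power2_comp_fcalc_adj_comp_le[OF A])
    show "continuous_on {0..onorm (\<lambda>x. adj A (A x))} (\<lambda>u. a / (sqrt u + e))"
      using e
      by (intro continuous_intros) (auto simp: add_nonneg_pos[THEN less_imp_neq, THEN not_sym])
    fix u :: real assume "u \<in> {0..onorm (\<lambda>x. adj A (A x))}"
    then have u: "0 \<le> u" by simp
    have "(sqrt u)\<^sup>2 \<le> (sqrt u + e)\<^sup>2" using u e by (intro power_mono) simp_all
    moreover have "0 < (sqrt u + e)\<^sup>2"
      using u e by (simp add: add_nonneg_pos[THEN less_imp_neq, THEN not_sym])
    ultimately have "u / (sqrt u + e)\<^sup>2 \<le> 1" using u by (simp add: divide_le_eq_1)
    then have "a\<^sup>2 * (u / (sqrt u + e)\<^sup>2) \<le> a\<^sup>2" by (rule mult_left_le) simp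
    moreover have "a / (sqrt u + e) * (u * (a / (sqrt u + e))) = a\<^sup>2 * (u / (sqrt u + e)\<^sup>2)"
      by (simp add: power2_eq_square)
    moreover have "0 \<le> a\<^sup>2 * (u / (sqrt u + e)\<^sup>2)" using u by simp
    ultimately show "\<bar>a / (sqrt u + e) * (u * (a / (sqrt u + e)))\<bar> \<le> a\<^sup>2" by (metis abs_of_nonneg)
  qed
  also have "\<dots> = (\<bar>a\<bar> * norm z)\<^sup>2" by (simp add: power_mult_distrib)
  finally show ?thesis by (rule power2_le_imp_le) simp
qed

text \<open>The substitute for the polar decomposition: with \<open>X = A\<^sup>* A\<close> and \<open>Y = A A\<^sup>*\<close>,
  \<open>A \<phi>(X) = g(\<surd>Y) A (\<surd>X + e)\<^sup>-\<^sup>1 f(\<surd>X)\<close> for \<open>\<phi>(u) = \<surd>u / (\<surd>u + e)\<close>, because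
  \<open>f g = id\<close> and \<open>A h(X) = h(Y) A\<close>.\<close>

lemma comp_fcalc_regularized_sqrt:
  fixes A :: "'a::chilbert_space \<Rightarrow> 'a"
  assumes A: "bounded_clinear A" and f: "continuous_on {0..} f" and g: "continuous_on {0..} g"
    and fg: "\<forall>t\<ge>0. f t * g t = t" and e: "0 < e"
  shows "A (fcalc (\<lambda>u. sqrt u / (sqrt u + e)) (\<lambda>x. adj A (A x)) x)
    = fcalc (\<lambda>u. g (sqrt u)) (\<lambda>x. A (adj A x))
        (A (fcalc (\<lambda>u. 1 / (sqrt u + e)) (\<lambda>x. adj A (A x))
          (fcalc (\<lambda>u. f (sqrt u)) (\<lambda>x. adj A (A x)) x)))"
proof -
  define X where "X = (\<lambda>x. adj A (A x))"
  have X: "positive_op X" unfolding X_def by (rule positive_op_adj_comp[OF A])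
  have fs: "continuous_on {0..} (\<lambda>u. f (sqrt u))" and gs: "continuous_on {0..} (\<lambda>u. g (sqrt u))"
    by (auto intro!: continuous_on_compose2[OF f] continuous_on_compose2[OF g] continuous_intros)
  have r: "continuous_on {0..onorm X} (\<lambda>u. 1 / (sqrt u + e))"
    using e
    by (intro continuous_intros) (auto simp: add_nonneg_pos[THEN less_imp_neq, THEN not_sym])
  have "fcalc (\<lambda>u. sqrt u / (sqrt u + e)) X
      = fcalc (\<lambda>u. (g (sqrt u) * (1 / (sqrt u + e))) * f (sqrt u)) X"
    using fg by (intro fcalc_cong) (simp add: ac_simps)
  then have "fcalc (\<lambda>u. sqrt u / (sqrt u + e)) X x
      = fcalc (\<lambda>u. g (sqrt u) * (1 / (sqrt u + e))) X (fcalc (\<lambda>u. f (sqrt u)) X x)"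
    using continuous_on_Icc_of_Ici[OF gs] r
    by (simp only: fcalc_mult[OF X _ continuous_on_Icc_of_Ici[OF fs]] continuous_on_mult)
  also have "\<dots>
      = fcalc (\<lambda>u. g (sqrt u)) X (fcalc (\<lambda>u. 1 / (sqrt u + e)) X (fcalc (\<lambda>u. f (sqrt u)) X x))"
    by (rule fcalc_mult[OF X continuous_on_Icc_of_Ici[OF gs] r])
  finally show ?thesis unfolding X_def by (simp add: fcalc_intertwining[OF A gs])
qed

lemma fcalc_regularized_partition:
  fixes X :: "'a::chilbert_space \<Rightarrow> 'a"
  assumes X: "positive_op X" and e: "0 < e"
  shows "fcalc (\<lambda>u. sqrt u / (sqrt u + e)) X x + fcalc (\<lambda>u. e / (sqrt u + e)) X x = x"
proof -
  have ne: "sqrt u + e \<noteq> 0" if "0 \<le> u" for u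
    using that e by (simp add: add_nonneg_pos[THEN less_imp_neq, THEN not_sym])
  have "fcalc (\<lambda>u. 1 * (sqrt u / (sqrt u + e)) + 1 * (e / (sqrt u + e))) X = fcalc (\<lambda>u. 1) X"
    using ne by (intro fcalc_cong) (simp add: add_divide_distrib[symmetric])
  moreover have cont: "continuous_on {0..onorm X} (\<lambda>u. sqrt u / (sqrt u + e))"
    "continuous_on {0..onorm X} (\<lambda>u. e / (sqrt u + e))"
    using ne by (auto intro!: continuous_intros)
  ultimately show ?thesis using fcalc_lin[OF X cont, of 1 1 x] fcalc_const[OF X, of 1 x] by simp
qed

lemma mixed_schwarz_regularized:
  fixes A :: "'a::chilbert_space \<Rightarrow> 'a"
  assumes A: "bounded_clinear A" and f: "continuous_on {0..} f" and g: "continuous_on {0..} g"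
    and fg: "\<forall>t\<ge>0. f t * g t = t" and e: "0 < e"
  shows "cmod (cinner (A x) x) \<le> norm (fcalc (\<lambda>u. f (sqrt u)) (\<lambda>x. adj A (A x)) x)
      * norm (fcalc (\<lambda>u. g (sqrt u)) (\<lambda>x. A (adj A x)) x) + e * (norm x)\<^sup>2"
proof -
  define X where "X = (\<lambda>x. adj A (A x))"
  define F where "F = fcalc (\<lambda>u. f (sqrt u)) X"
  define G where "G = fcalc (\<lambda>u. g (sqrt u)) (\<lambda>x. A (adj A x))"
  define R where "R = fcalc (\<lambda>u. 1 / (sqrt u + e)) X"
  define \<phi> where "\<phi> = (\<lambda>u. sqrt u / (sqrt u + e))"
  define \<psi> where "\<psi> = (\<lambda>u. e / (sqrt u + e))"
  have "selfadjoint G"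
    unfolding G_def using positive_op_comp_adj[OF A]
    by (intro selfadjoint_fcalc continuous_on_compose2[OF g]) (auto intro!: continuous_intros)
  then have "cinner (A (fcalc \<phi> X x)) x = cinner (A (R (F x))) (G x)"
    using comp_fcalc_regularized_sqrt[OF A f g fg e, of x]
    by (simp add: selfadjoint_def X_def F_def G_def R_def \<phi>_def)
  then have "cmod (cinner (A (fcalc \<phi> X x)) x) \<le> norm (A (R (F x))) * norm (G x)"
    by (simp add: cmod_cinner_le)
  also have "\<dots> \<le> norm (F x) * norm (G x)"
    using norm_comp_fcalc_regularized_le[OF A e, of 1 "F x"]
    by (intro mult_right_mono) (simp_all add: X_def R_def)
  finally have main: "cmod (cinner (A (fcalc \<phi> X x)) x) \<le> norm (F x) * norm (G x)" .
  have "cmod (cinner (A (fcalc \<psi> X x)) x) \<le> norm (A (fcalc \<psi> X x)) * norm x"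
    by (rule cmod_cinner_le)
  also have "\<dots> \<le> e * norm x * norm x"
    using norm_comp_fcalc_regularized_le[OF A e, of e x] e
    by (intro mult_right_mono) (simp_all add: X_def \<psi>_def)
  finally have defect: "cmod (cinner (A (fcalc \<psi> X x)) x) \<le> e * (norm x)\<^sup>2"
    by (simp add: power2_eq_square mult.assoc)
  have "x = fcalc \<phi> X x + fcalc \<psi> X x"
    unfolding \<phi>_def \<psi>_def X_def
    using fcalc_regularized_partition[OF positive_op_adj_comp[OF A] e] by simp
  then have "cinner (A x) x = cinner (A (fcalc \<phi> X x)) x + cinner (A (fcalc \<psi> X x)) x"
    by (metis bounded_clinear_add[OF A] cinner_add_left)
  then have "cmod (cinner (A x) x)
      \<le> cmod (cinner (A (fcalc \<phi> X x)) x) + cmod (cinner (A (fcalc \<psi> X x)) x)"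
    by (simp add: norm_triangle_ineq)
  then show ?thesis using main defect by (simp add: F_def G_def X_def)
qed

theorem mixed_schwarz:
  fixes A :: "'a::chilbert_space \<Rightarrow> 'a"
  assumes A: "bounded_clinear A" and f: "continuous_on {0..} f" and g: "continuous_on {0..} g"
    and fg: "\<forall>t\<ge>0. f t * g t = t"
  shows "cmod (cinner (A x) x) \<le> norm (fcalc f (op_abs A) x) * norm (fcalc g (op_abs (adj A)) x)"
proof -
  have "op_abs A = fcalc sqrt (\<lambda>x. adj A (A x))" and "op_abs (adj A) = fcalc sqrt (\<lambda>x. A (adj A x))"
    by (simp_all add: op_abs_def adj_adj[OF A])
  then have "fcalc f (op_abs A) x = fcalc (\<lambda>u. f (sqrt u)) (\<lambda>x. adj A (A x)) x"
    and "fcalc g (op_abs (adj A)) x = fcalc (\<lambda>u. g (sqrt u)) (\<lambda>x. A (adj A x)) x"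
    by (simp_all add: fcalc_fcalc_sqrt positive_op_adj_comp positive_op_comp_adj A f g)
  moreover have "cmod (cinner (A x) x) \<le> norm (fcalc (\<lambda>u. f (sqrt u)) (\<lambda>x. adj A (A x)) x)
      * norm (fcalc (\<lambda>u. g (sqrt u)) (\<lambda>x. A (adj A x)) x) + e" if "0 < e" for e
  proof -
    define d where "d = e / ((norm x)\<^sup>2 + 1)"
    have pos: "0 < (norm x)\<^sup>2 + 1" by (simp add: add_nonneg_pos)
    have "d * (norm x)\<^sup>2 = e * ((norm x)\<^sup>2 / ((norm x)\<^sup>2 + 1))" by (simp add: d_def)
    also have "\<dots> \<le> e" using that pos by (intro mult_left_le) simp_all
    finally show ?thesis
      using mixed_schwarz_regularized[OF A f g fg, of d x] that pos by (simp add: d_def)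
  qed
  ultimately show ?thesis by (simp add: field_le_epsilon)
qed

section \<open>A McCarthy-type inequality\<close>

lemma powr_ge_tangent:
  fixes q u v :: real
  assumes q: "1 \<le> q" and v: "0 < v" and u: "0 \<le> u"
  shows "v powr q + q * v powr (q - 1) * (u - v) \<le> u powr q"
proof (cases "u = 0")
  case True
  have "v powr (q - 1) * v = v powr q" using v by (simp add: powr_mult_base mult.commute)
  then have "v powr q + q * v powr (q - 1) * (u - v) = v powr q * (1 - q)"
    using True by (simp add: algebra_simps)
  also have "\<dots> \<le> 0" using q by (simp add: mult_nonneg_nonpos)
  finally show ?thesis using True by simp
next
  case False
  have "q * v powr (q - 1) * (u - v) \<le> u powr q - v powr q"
  proof (rule convex_on_imp_above_tangent[OF powr_convex[OF q]])
    show "connected {0::real<..}" by (simp add: convex_connected)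
    show "v \<in> interior {0<..}" using v by (subst interior_open) auto
    show "u \<in> {0<..}" using u False by simp
    show "((\<lambda>x. x powr q) has_real_derivative q * v powr (q - 1)) (at v within {0<..})"
      by (rule has_field_derivative_at_within[OF has_real_derivative_powr[OF v]])
  qed
  then show ?thesis by simp
qed

lemma power2_powr_half:
  assumes "0 \<le> t" and "0 < p"
  shows "(t\<^sup>2) powr (p / 2) = t powr (p::real)"
proof (cases "t = 0")
  case False
  then have "t\<^sup>2 = t powr 2" using assms(1) by simp
  then show ?thesis by (simp add: powr_powr)
qed (use assms(2) in simp)

text \<open>\<open>\<parallel>Q x\<parallel>\<^sup>p = \<langle>Q\<^sup>2 x, x\<rangle>\<^bsup>p/2\<^esup> \<le> \<langle>Q\<^sup>p x, x\<rangle>\<close>: the convex function \<open>t \<mapsto> t\<^bsup>p/2\<^esup>\<close> lies above its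
  tangent at \<open>\<parallel>Q x\<parallel>\<^sup>2\<close>, and the functional calculus preserves this inequality.\<close>

lemma norm_powr_le_cinner_fcalc_powr:
  fixes Q :: "'a::chilbert_space \<Rightarrow> 'a"
  assumes Q: "positive_op Q" and p: "2 \<le> p" and x: "norm x = 1"
  shows "(norm (Q x)) powr p \<le> Re (cinner (fcalc (\<lambda>t. t powr p) Q x) x)"
proof -
  have sa: "selfadjoint Q" using Q by (simp add: positive_op_def)
  have hc: "continuous_on {0..onorm Q} (\<lambda>t. t powr p)"
    using p by (intro continuous_on_powr' continuous_on_id continuous_on_const) auto
  define c where "c = norm (Q x)"
  show ?thesis
  proof (cases "c = 0")
    case True
    then show ?thesis using p fcalc_nonneg[OF Q hc] by (simp add: c_def)
  next
    case False
    then have c: "0 < c" by (simp add: c_def)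
    define k where "k = (p / 2) * (c\<^sup>2) powr (p / 2 - 1)"
    define a where "a = c powr p - k * c\<^sup>2"
    define \<psi> where "\<psi> = (\<lambda>t::real. a * 1 + k * (t * t))"
    have \<psi>: "continuous_on {0..onorm Q} \<psi>" unfolding \<psi>_def by (intro continuous_intros)
    have \<psi>Q: "fcalc \<psi> Q x = a *\<^sub>R x + k *\<^sub>R Q (Q x)"
      unfolding \<psi>_def by (rule fcalc_quadratic[OF Q])
    have "0 \<le> 1 * t powr p + (- 1) * \<psi> t" if "t \<in> {0..onorm Q}" for t
    proof -
      have t: "0 \<le> t" using that by simp
      have "(c\<^sup>2) powr (p / 2) + (p / 2) * (c\<^sup>2) powr (p / 2 - 1) * (t\<^sup>2 - c\<^sup>2) \<le> (t\<^sup>2) powr (p / 2)"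
        using p c by (intro powr_ge_tangent) simp_all
      then have "c powr p + k * (t\<^sup>2 - c\<^sup>2) \<le> t powr p"
        using power2_powr_half[of t p] power2_powr_half[of c p] t c p by (simp add: k_def)
      then show ?thesis by (simp add: \<psi>_def a_def power2_eq_square algebra_simps)
    qed
    then have "0 \<le> Re (cinner (fcalc (\<lambda>t. 1 * t powr p + (- 1) * \<psi> t) Q x) x)"
      by (intro fcalc_nonneg[OF Q] continuous_intros hc \<psi>)
    also have "fcalc (\<lambda>t. 1 * t powr p + (- 1) * \<psi> t) Q x = fcalc (\<lambda>t. t powr p) Q x - fcalc \<psi> Q x"
      using fcalc_lin[OF Q hc \<psi>, of 1 "- 1" x] by simp
    also have "Re (cinner \<dots> x) = Re (cinner (fcalc (\<lambda>t. t powr p) Q x) x) - (a + k * c\<^sup>2)"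
    proof -
      have "cinner (Q (Q x)) x = cinner (Q x) (Q x)" using sa by (simp add: selfadjoint_def)
      then show ?thesis
        by (simp add: \<psi>Q cinner_diff_left cinner_add_left cinner_scaleR_left Re_cinner_self x c_def)
    qed
    finally show ?thesis by (simp add: a_def c_def)
  qed
qed

lemma powr_mult_powr_le_convex_comb:
  fixes a b \<alpha> :: real
  assumes "0 \<le> a" "0 \<le> b" "0 < \<alpha>" "\<alpha> < 1"
  shows "a powr \<alpha> * b powr (1 - \<alpha>) \<le> \<alpha> * a + (1 - \<alpha>) * b"
  using Youngs_inequality_0[of \<alpha> "1 - \<alpha>" a b] assms
  by (cases "a = 0 \<or> b = 0") (auto simp: mult_nonneg_nonneg)

lemma geometric_mean_four_le:
  fixes h1 h2 k1 k2 \<alpha> :: real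
  assumes "0 \<le> h1" "0 \<le> h2" "0 \<le> k1" "0 \<le> k2" "0 < \<alpha>" "\<alpha> < 1"
  shows "(h1 * h2) powr (\<alpha> / 2) * (k1 * k2) powr ((1 - \<alpha>) / 2)
    \<le> (\<alpha> * h1 + \<alpha> * h2 + (1 - \<alpha>) * k1 + (1 - \<alpha>) * k2) / 2"
proof -
  define u1 where "u1 = h1 powr \<alpha> * k1 powr (1 - \<alpha>)"
  define u2 where "u2 = h2 powr \<alpha> * k2 powr (1 - \<alpha>)"
  have "(h1 * h2) powr (\<alpha> / 2) * (k1 * k2) powr ((1 - \<alpha>) / 2)
      = u1 powr (1 / 2) * u2 powr (1 - 1 / 2)"
    using assms by (simp add: u1_def u2_def powr_mult powr_powr ac_simps)
  also have "\<dots> \<le> u1 / 2 + u2 / 2"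
    using powr_mult_powr_le_convex_comb[of u1 u2 "1 / 2"] by (simp add: u1_def u2_def)
  also have "\<dots> \<le> (\<alpha> * h1 + (1 - \<alpha>) * k1) / 2 + (\<alpha> * h2 + (1 - \<alpha>) * k2) / 2"
    using powr_mult_powr_le_convex_comb[OF assms(1,3,5,6)]
      powr_mult_powr_le_convex_comb[OF assms(2,4,5,6)]
    unfolding u1_def u2_def by (auto intro!: add_mono divide_right_mono)
  finally show ?thesis by (simp add: field_simps)
qed

lemma positive_op_fcalc_op_abs:
  fixes T :: "'a::chilbert_space \<Rightarrow> 'a"
  assumes "bounded_clinear T" and "continuous_on {0..} h" and "\<forall>t\<ge>0. 0 \<le> h t"
  shows "positive_op (fcalc h (op_abs T))"
  unfolding op_abs_def
  using assms(3)
  by (intro positive_op_fcalc[OF positive_op_fcalc_sqrt[OF positive_op_adj_comp[OF assms(1)]]]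
      continuous_on_Icc_of_Ici[OF assms(2)]) auto

lemma positive_op_fcalc_powr_op_abs:
  fixes T :: "'a::chilbert_space \<Rightarrow> 'a"
  assumes "bounded_clinear T" and "continuous_on {0..} h" and "\<forall>t\<ge>0. 0 \<le> h t" and "0 < e"
  shows "positive_op (fcalc (\<lambda>t. t powr e) (fcalc h (op_abs T)))"
  using assms(4)
  by (intro positive_op_fcalc[OF positive_op_fcalc_op_abs[OF assms(1-3)]] continuous_on_powr'
      continuous_on_id continuous_on_const) auto

lemma mixed_mccarthy:
  fixes A :: "'a::chilbert_space \<Rightarrow> 'a"
  assumes A: "bounded_clinear A" and f: "continuous_on {0..} f" and g: "continuous_on {0..} g"
    and fnn: "\<forall>t\<ge>0. 0 \<le> f t" and gnn: "\<forall>t\<ge>0. 0 \<le> g t" and fg: "\<forall>t\<ge>0. f t * g t = t"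
    and x: "norm x = 1" and p: "2 \<le> p"
  shows "cmod (cinner (A x) x) powr p
    \<le> Re (cinner (fcalc (\<lambda>t. t powr p) (fcalc f (op_abs A)) x) x)
      * Re (cinner (fcalc (\<lambda>t. t powr p) (fcalc g (op_abs (adj A))) x) x)"
proof -
  have F: "positive_op (fcalc f (op_abs A))" and G: "positive_op (fcalc g (op_abs (adj A)))"
    using positive_op_fcalc_op_abs bounded_clinear_adj A f g fnn gnn by blast+
  have "cmod (cinner (A x) x) powr p
      \<le> (norm (fcalc f (op_abs A) x) * norm (fcalc g (op_abs (adj A)) x)) powr p"
    using mixed_schwarz[OF A f g fg] p by (intro powr_mono2) simp_all
  also have "\<dots> = norm (fcalc f (op_abs A) x) powr p * norm (fcalc g (op_abs (adj A)) x) powr p"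
    by (simp add: powr_mult)
  also have "\<dots> \<le> Re (cinner (fcalc (\<lambda>t. t powr p) (fcalc f (op_abs A)) x) x)
      * Re (cinner (fcalc (\<lambda>t. t powr p) (fcalc g (op_abs (adj A))) x) x)"
    using norm_powr_le_cinner_fcalc_powr[OF F p x] norm_powr_le_cinner_fcalc_powr[OF G p x]
    by (intro mult_mono) (auto intro: order_trans[OF powr_ge_zero])
  finally show ?thesis .
qed

lemma powr_mult_powr_le_half_onorm:
  fixes H1 H2 H3 H4 :: "'a::complex_inner \<Rightarrow> 'a"
  assumes H: "positive_op H1" "positive_op H2" "positive_op H3" "positive_op H4"
    and x: "norm x = 1" and \<alpha>: "0 < \<alpha>" "\<alpha> < 1"
    and a: "0 \<le> a" "a \<le> Re (cinner (H1 x) x) * Re (cinner (H2 x) x)"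
    and b: "0 \<le> b" "b \<le> Re (cinner (H3 x) x) * Re (cinner (H4 x) x)"
  shows "a powr (\<alpha> / 2) * b powr ((1 - \<alpha>) / 2)
    \<le> 1 / 2 * onorm (\<lambda>y. \<alpha> *\<^sub>R H1 y + \<alpha> *\<^sub>R H2 y + (1 - \<alpha>) *\<^sub>R H3 y + (1 - \<alpha>) *\<^sub>R H4 y)"
proof -
  have "a powr (\<alpha> / 2) * b powr ((1 - \<alpha>) / 2)
      \<le> (Re (cinner (H1 x) x) * Re (cinner (H2 x) x)) powr (\<alpha> / 2)
        * (Re (cinner (H3 x) x) * Re (cinner (H4 x) x)) powr ((1 - \<alpha>) / 2)"
    using a b \<alpha> by (intro mult_mono powr_mono2) simp_all
  also have "\<dots> \<le> (\<alpha> * Re (cinner (H1 x) x) + \<alpha> * Re (cinner (H2 x) x)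
      + (1 - \<alpha>) * Re (cinner (H3 x) x) + (1 - \<alpha>) * Re (cinner (H4 x) x)) / 2"
    using H \<alpha> by (intro geometric_mean_four_le) (simp_all add: positive_op_def)
  also have "\<dots> = Re (cinner (\<alpha> *\<^sub>R H1 x + \<alpha> *\<^sub>R H2 x + (1 - \<alpha>) *\<^sub>R H3 x + (1 - \<alpha>) *\<^sub>R H4 x) x) / 2"
    by (simp add: cinner_add_left cinner_scaleR_left)
  also have "\<dots> \<le> onorm (\<lambda>y. \<alpha> *\<^sub>R H1 y + \<alpha> *\<^sub>R H2 y + (1 - \<alpha>) *\<^sub>R H3 y + (1 - \<alpha>) *\<^sub>R H4 y) / 2"
  proof -
    have "bounded_linear (\<lambda>y. c *\<^sub>R T y)" if "positive_op T" for c and T :: "'a \<Rightarrow> 'a"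
      using that
      by (intro bounded_linear_compose[OF bounded_linear_scaleR_right]
          bounded_clinear_imp_bounded_linear)
        (simp add: positive_op_def)
    then have "bounded_linear (\<lambda>y. \<alpha> *\<^sub>R H1 y + \<alpha> *\<^sub>R H2 y + (1 - \<alpha>) *\<^sub>R H3 y + (1 - \<alpha>) *\<^sub>R H4 y)"
      using H by (intro bounded_linear_add) simp_all
    then show ?thesis using Re_cinner_le_onorm x by (simp add: divide_right_mono)
  qed
  finally show ?thesis by simp
qed

theorem theorem2p8:
  fixes A B :: "'a::chilbert_space \<Rightarrow> 'a"
    and f g :: "real \<Rightarrow> real"
    and x :: 'a and r s \<alpha> :: real
  assumes "bounded_clinear A" and "bounded_clinear B"
    and "continuous_on {0..} f" and "continuous_on {0..} g"
    and "\<forall>t\<ge>0. f t \<ge> 0" and "\<forall>t\<ge>0. g t \<ge> 0"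
    and "\<forall>t\<ge>0. f t * g t = t"
    and "norm x = 1"
    and "r \<ge> 1" and "s \<ge> 1"
    and "0 < \<alpha>" and "\<alpha> < 1"
  shows "cmod (cinner (A x) x) powr r * cmod (cinner (B x) x) powr s \<le>
    (1/2) * onorm (\<lambda>y.
        \<alpha> *\<^sub>R fcalc (\<lambda>t. t powr (2 * r / \<alpha>)) (fcalc f (op_abs A)) y
      + \<alpha> *\<^sub>R fcalc (\<lambda>t. t powr (2 * r / \<alpha>)) (fcalc g (op_abs (adj A))) y
      + (1-\<alpha>) *\<^sub>R fcalc (\<lambda>t. t powr (2 * s / (1 - \<alpha>))) (fcalc f (op_abs B)) y
      + (1-\<alpha>) *\<^sub>R fcalc (\<lambda>t. t powr (2 * s / (1 - \<alpha>))) (fcalc g (op_abs (adj B))) y)"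
proof -
  let ?p = "2 * r / \<alpha>" and ?q = "2 * s / (1 - \<alpha>)"
  have p: "2 \<le> ?p" and q: "2 \<le> ?q" using assms(9-12) by (simp_all add: le_divide_eq)
  note mccarthy = mixed_mccarthy[OF _ assms(3-8)]
  note positive = positive_op_fcalc_powr_op_abs[OF _ assms(3,5)]
    positive_op_fcalc_powr_op_abs[OF _ assms(4,6)]
  have "cmod (cinner (A x) x) powr r * cmod (cinner (B x) x) powr s
      = (cmod (cinner (A x) x) powr ?p) powr (\<alpha> / 2)
        * (cmod (cinner (B x) x) powr ?q) powr ((1 - \<alpha>) / 2)"
    using assms(11,12) by (simp add: powr_powr)
  also have "\<dots> \<le> 1 / 2 * onorm (\<lambda>y.
        \<alpha> *\<^sub>R fcalc (\<lambda>t. t powr ?p) (fcalc f (op_abs A)) y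
      + \<alpha> *\<^sub>R fcalc (\<lambda>t. t powr ?p) (fcalc g (op_abs (adj A))) y
      + (1 - \<alpha>) *\<^sub>R fcalc (\<lambda>t. t powr ?q) (fcalc f (op_abs B)) y
      + (1 - \<alpha>) *\<^sub>R fcalc (\<lambda>t. t powr ?q) (fcalc g (op_abs (adj B))) y)"
    using p q assms(1,2,8,11,12) bounded_clinear_adj mccarthy[OF assms(1) p] mccarthy[OF assms(2) q]
    by (intro powr_mult_powr_le_half_onorm positive) simp_all
  finally show ?thesis by simp
qed

end
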